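(* Let $d\ge2$, $\tau>0$, $2d/3<p\le d$ and $u\in\mathcal E_p$. Then there is $C=C(d,p)$ such that for all $t>0$, $$\|B(u,u)(t)\|_{L^{d/2}}\le C\,\tau^{-3/2+d/p}\,|\!|\!|u|\!|\!|_p^2.$$ In particular $B(u,u)\in L^\infty(0,\infty;L^{d/2}(\mathbb{R}^d))$.
   Context: $\mathcal E_p=\{u\in L^\infty_{\rm loc}(0,\infty;L^p(\mathbb{R}^d)):|\!|\!|u|\!|\!|_p=\operatorname{ess\,sup}_{t>0}t^{1-d/(2p)}\|u(t)\|_{L^p}<\infty\}$. $\mathbb Lz(t)=\tau^{-1}\int_0^t\nabla e^{\tau^{-1}(t-s)\Delta}z(s)\,ds$, $B(u,z)(t)=-\int_0^t\nabla e^{(t-s)\Delta}\cdot(u(s)\mathbb Lz(s))\,ds$, with $e^{t\Delta}$ the heat semigroup on $\mathbb{R}^d$. *)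

theory Defs
  imports "HOL-Analysis.Analysis"
begin

text \<open>Spatial dimension d = CARD('d); points of R^d are of type real^'d.\<close>

definition Lpnorm :: "real \<Rightarrow> ('a::euclidean_space \<Rightarrow> real) \<Rightarrow> ennreal" where
  "Lpnorm p f =
     (let I = (\<integral>\<^sup>+ x. ennreal (\<bar>f x\<bar> powr p) \<partial>lborel)
      in if I = \<infinity> then \<infinity> else ennreal (enn2real I powr (1 / p)))"

definition heat_kernel :: "real \<Rightarrow> real^'d \<Rightarrow> real" where
  "heat_kernel t x = (4 * pi * t) powr (- real CARD('d) / 2) * exp (- (norm x)\<^sup>2 / (4 * t))"

definition grad_heat_kernel :: "real \<Rightarrow> real^'d \<Rightarrow> real^'d" where
  "grad_heat_kernel t x = (- heat_kernel t x / (2 * t)) *\<^sub>R x"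

text \<open>Lz(t) = tau^{-1} int_0^t grad e^{tau^{-1}(t-s) Delta} z(s) ds  (pointwise in x).\<close>
definition Lop :: "real \<Rightarrow> (real \<Rightarrow> real^'d \<Rightarrow> real) \<Rightarrow> real \<Rightarrow> real^'d \<Rightarrow> real^'d" where
  "Lop \<tau> z t x = (1 / \<tau>) *\<^sub>R
     (LINT s:{0<..<t}|lborel. (LINT y|lborel. z s y *\<^sub>R grad_heat_kernel ((t - s) / \<tau>) (x - y)))"

text \<open>B(u,z)(t) = - int_0^t grad e^{(t-s)Delta} . (u(s) Lz(s)) ds  (pointwise in x).\<close>
definition Bop :: "real \<Rightarrow> (real \<Rightarrow> real^'d \<Rightarrow> real) \<Rightarrow> (real \<Rightarrow> real^'d \<Rightarrow> real) \<Rightarrow> real \<Rightarrow> real^'d \<Rightarrow> real" where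
  "Bop \<tau> u z t x = - (LINT s:{0<..<t}|lborel.
      (LINT y|lborel. grad_heat_kernel (t - s) (x - y) \<bullet> (u s y *\<^sub>R Lop \<tau> z s y)))"

definition triple_norm :: "real \<Rightarrow> (real \<Rightarrow> real^'d \<Rightarrow> real) \<Rightarrow> ennreal" where
  "triple_norm p u = Inf {M. AE t in lborel. t > 0 \<longrightarrow>
      ennreal (t powr (1 - real CARD('d) / (2 * p))) * Lpnorm p (u t) \<le> M}"

text \<open>E_p: (jointly measurable representatives of) strongly measurable
  u : (0,oo) -> L^p(R^d) with finite |||u|||_p (this implies L^oo_loc).\<close>
definition Ep :: "real \<Rightarrow> (real \<Rightarrow> real^'d \<Rightarrow> real) set" where
  "Ep p = {u. (\<lambda>(t, x). u t x) \<in> borel_measurable (lborel \<Otimes>\<^sub>M lborel)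
              \<and> triple_norm p u < \<infinity>}"

end

theory Submission
  imports Defs "HOL-Probability.Distributions"
begin

text \<open>Moving absolute values inside the integrals bounds \<open>|B(u,u)(t)|\<close> by a nonnegative
  double time-space convolution. In space, the gradient of the heat kernel satisfies
  \<open>\<parallel>\<nabla>G\<^sub>r\<parallel>\<^sub>a = c r\<^bsup>d/(2a) - (d+1)/2\<^esup>\<close>, so Young's inequality (Minkowski in time,
  realised by a weighted Hoelder inequality) and the beta integral
  \<open>\<integral>\<^sub>0\<^sup>s (s-\<sigma>)\<^sup>e \<sigma>\<^sup>\<beta> d\<sigma> = C s\<^bsup>1+e+\<beta>\<^esup>\<close> give
  \<open>\<parallel>L u(s)\<parallel>\<^sub>q \<le> C \<tau>\<^bsup>-3/2+d/p\<^esup> s\<^bsup>1/2-d/(2p)\<^esup> |||u|||\<^sub>p\<close> with \<open>1/q = 2/d - 1/p\<close>. Hoelder gives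
  \<open>\<parallel>u L u(s)\<parallel>\<^sub>d\<^sub>/\<^sub>2 \<le> C s\<^bsup>-1/2\<^esup>\<close>, and the \<open>L\<^sup>1\<close> bound \<open>(t-s)\<^bsup>-1/2\<^esup>\<close> on \<open>\<nabla>G\<^sub>t\<^sub>-\<^sub>s\<close>
  leaves \<open>\<integral>\<^sub>0\<^sup>t (t-s)\<^bsup>-1/2\<^esup> s\<^bsup>-1/2\<^esup> ds = \<pi>\<close>, independent of \<open>t\<close>. The range
  \<open>2d/3 < p \<le> d\<close> is exactly what makes the Young exponents admissible and the beta
  integrals finite.\<close>

section \<open>Hoelder and Young inequalities on \<open>[0, \<infinity>]\<close>\<close>

text \<open>Powers on \<open>[0, \<infinity>]\<close>, meant for exponents \<open>r \<ge> 0\<close>: \<open>x\<^sup>0 = 1\<close> and \<open>\<infinity>\<^sup>r = \<infinity>\<close> for \<open>r > 0\<close>.\<close>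
definition enn_powr :: "ennreal \<Rightarrow> real \<Rightarrow> ennreal" where
  "enn_powr x r = (if r = 0 then 1 else if x = top then top else ennreal (enn2real x powr r))"

lemma enn_powr_0[simp]: "enn_powr x 0 = 1" by (simp add: enn_powr_def)
lemma enn_powr_1[simp]: "enn_powr x 1 = x"
  by (cases x) (auto simp: enn_powr_def)
lemma top_enn_powr[simp]: "r \<noteq> 0 \<Longrightarrow> enn_powr top r = top" by (simp add: enn_powr_def)
lemma zero_enn_powr[simp]: "r \<noteq> 0 \<Longrightarrow> enn_powr 0 r = 0" by (simp add: enn_powr_def)
lemma enn_powr_ennreal: "0 \<le> c \<Longrightarrow> r \<noteq> 0 \<Longrightarrow> enn_powr (ennreal c) r = ennreal (c powr r)"
  by (simp add: enn_powr_def)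
lemma enn_powr_ennreal_pos: "0 < c \<Longrightarrow> enn_powr (ennreal c) r = ennreal (c powr r)"
  by (simp add: enn_powr_def)

lemma enn_powr_mult: assumes "r \<ge> 0" shows "enn_powr (x * y) r = enn_powr x r * enn_powr y r"
proof (cases "r = 0")
  case False
  then have r: "r > 0" using assms by simp
  show ?thesis
  proof (cases "x = top \<or> y = top")
    case True
    then show ?thesis using r
      by (cases "x = 0"; cases "y = 0")
         (auto simp: enn_powr_def ennreal_mult_top ennreal_top_mult powr_gt_zero ennreal_mult_eq_top_iff enn2real_eq_0_iff)
  next
    case False
    define a b where "a = enn2real x" and "b = enn2real y"
    have a: "x = ennreal a" "0 \<le> a" and b: "y = ennreal b" "0 \<le> b"
      using False by (auto simp: a_def b_def ennreal_enn2real_if)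
    have xy: "x * y = ennreal (a * b)" unfolding a(1) b(1) using a(2) b(2) by (rule ennreal_mult[symmetric])
    have "enn_powr (x * y) r = ennreal ((a * b) powr r)" unfolding xy using r a b by (simp add: enn_powr_ennreal)
    also have "\<dots> = enn_powr x r * enn_powr y r" using r a b by (simp add: enn_powr_ennreal powr_mult ennreal_mult)
    finally show ?thesis .
  qed
qed simp

lemma enn_powr_add: assumes "a \<ge> 0" "b \<ge> 0" shows "enn_powr x a * enn_powr x b = enn_powr x (a + b)"
proof (cases x)
  case (real c)
  then show ?thesis using assms
    by (cases "a = 0"; cases "b = 0"; cases "c = 0")
       (auto simp: enn_powr_def powr_add ennreal_mult)
next
  case top then show ?thesis using assms
    by (cases "a = 0"; cases "b = 0") (auto simp: enn_powr_def)
qed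

lemma enn_powr_enn_powr: assumes "a \<ge> 0" "b \<ge> 0" shows "enn_powr (enn_powr x a) b = enn_powr x (a * b)"
proof (cases x)
  case (real c)
  then show ?thesis using assms
    by (cases "a = 0"; cases "b = 0") (auto simp: enn_powr_def powr_powr)
next
  case top then show ?thesis using assms
    by (cases "a = 0"; cases "b = 0") (auto simp: enn_powr_def)
qed

lemma enn_powr_mono: assumes "x \<le> y" "r \<ge> 0" shows "enn_powr x r \<le> enn_powr y r"
proof (cases "r = 0")
  case False
  show ?thesis
  proof (cases y)
    case (real c)
    with assms obtain b where "x = ennreal b" "0 \<le> b" "b \<le> c"
      by (metis ennreal_cases ennreal_le_iff ennreal_neq_top top.extremum_uniqueI)
    then show ?thesis using real False assms
      by (auto simp: enn_powr_def intro!: ennreal_leI powr_mono2)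
  qed (use False in \<open>simp add: enn_powr_def\<close>)
qed simp

lemma enn_powr_eq_0_iff: "r \<noteq> 0 \<Longrightarrow> enn_powr x r = 0 \<longleftrightarrow> x = 0"
  by (cases x) (auto simp: enn_powr_def)

lemma enn_powr_eq_top_iff: "r \<noteq> 0 \<Longrightarrow> enn_powr x r = top \<longleftrightarrow> x = top"
  by (cases x) (auto simp: enn_powr_def)

lemma measurable_enn_powr[measurable]:
  assumes [measurable]: "f \<in> borel_measurable M"
  shows "(\<lambda>x. enn_powr (f x) r) \<in> borel_measurable M"
  unfolding enn_powr_def by measurable

lemma enn_powr_geometric_le_arithmetic:
  assumes "0 < t" "t < 1"
  shows "enn_powr a t * enn_powr b (1 - t) \<le> ennreal t * a + ennreal (1 - t) * b"
proof (cases "a = 0 \<or> b = 0")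
  case True then show ?thesis using assms by auto
next
  case nz: False
  show ?thesis
  proof (cases "a = top \<or> b = top")
    case True then show ?thesis using assms nz
      by (auto simp: ennreal_mult_top ennreal_top_mult)
  next
    case False
    define x y where "x = enn2real a" and "y = enn2real b"
    have a: "a = ennreal x" "0 < x" and b: "b = ennreal y" "0 < y"
      using False nz by (auto simp: x_def y_def ennreal_enn2real_if enn2real_eq_0_iff
          intro!: enn2real_nonneg order.not_eq_order_implies_strict)
    have "x powr t * y powr (1 - t) \<le> t * x + (1 - t) * y"
      using Youngs_inequality_0[of t "1 - t" x y] assms a b by simp
    then have "ennreal (x powr t * y powr (1 - t)) \<le> ennreal (t * x + (1 - t) * y)"
      by (rule ennreal_leI)
    moreover have "ennreal (t * x + (1 - t) * y) = ennreal t * a + ennreal (1 - t) * b"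
      using a b assms by (simp add: ennreal_plus ennreal_mult)
    ultimately show ?thesis using a b assms
      by (simp add: enn_powr_ennreal ennreal_mult)
  qed
qed

lemma nn_integral_Hoelder_normalized:
  assumes [measurable]: "f \<in> borel_measurable M" "g \<in> borel_measurable M"
    and t: "0 < t" "t < 1" and fg: "(\<integral>\<^sup>+x. f x \<partial>M) = 1" "(\<integral>\<^sup>+x. g x \<partial>M) = 1"
  shows "(\<integral>\<^sup>+x. enn_powr (f x) t * enn_powr (g x) (1 - t) \<partial>M) \<le> 1"
proof -
  have "(\<integral>\<^sup>+x. enn_powr (f x) t * enn_powr (g x) (1 - t) \<partial>M)
      \<le> (\<integral>\<^sup>+x. ennreal t * f x + ennreal (1 - t) * g x \<partial>M)"
    using t by (intro nn_integral_mono enn_powr_geometric_le_arithmetic)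
  also have "\<dots> = 1"
    using t fg by (simp add: nn_integral_add nn_integral_cmult flip: ennreal_plus)
  finally show ?thesis .
qed

lemma nn_integral_Hoelder:
  assumes [measurable]: "f \<in> borel_measurable M" "g \<in> borel_measurable M"
    and t: "0 \<le> t" "t \<le> 1"
  shows "(\<integral>\<^sup>+x. enn_powr (f x) t * enn_powr (g x) (1 - t) \<partial>M)
          \<le> enn_powr (\<integral>\<^sup>+x. f x \<partial>M) t * enn_powr (\<integral>\<^sup>+x. g x \<partial>M) (1 - t)"
proof -
  define A B where "A = (\<integral>\<^sup>+x. f x \<partial>M)" and "B = (\<integral>\<^sup>+x. g x \<partial>M)"
  consider "t = 0" | "t = 1" | "0 < t" "t < 1" "A = 0 \<or> B = 0"
    | "0 < t" "t < 1" "A \<noteq> 0" "B \<noteq> 0" "A = \<infinity> \<or> B = \<infinity>"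
    | "0 < t" "t < 1" "A \<noteq> 0" "B \<noteq> 0" "A \<noteq> \<infinity>" "B \<noteq> \<infinity>"
    using t by fastforce
  then show ?thesis
  proof cases
    case 3
    then have "AE x in M. enn_powr (f x) t * enn_powr (g x) (1 - t) = 0"
      by (auto simp: A_def B_def nn_integral_0_iff_AE elim: AE_mp)
    then have "(\<integral>\<^sup>+x. enn_powr (f x) t * enn_powr (g x) (1 - t) \<partial>M) = 0"
      by (simp add: nn_integral_0_iff_AE)
    then show ?thesis by simp
  next
    case 4
    then show ?thesis
      by (auto simp: A_def[symmetric] B_def[symmetric] ennreal_mult_eq_top_iff enn_powr_eq_0_iff enn_powr_eq_top_iff)
  next
    case 5
    have inv: "A * inverse A = 1" "B * inverse B = 1"
      using 5 ennreal_divide_self[of A] ennreal_divide_self[of B] by (auto simp: divide_ennreal_def top.not_eq_extremum)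
    have scale: "enn_powr (h x) s = enn_powr C s * enn_powr (h x * inverse C) s"
      if "C * inverse C = 1" "0 \<le> s" for h :: "'a \<Rightarrow> ennreal" and C x s
    proof -
      have "h x = C * (h x * inverse C)" using that(1) by (metis mult.assoc mult.commute mult_1)
      then show ?thesis using that(2) by (metis enn_powr_mult)
    qed
    have "(\<integral>\<^sup>+x. enn_powr (f x) t * enn_powr (g x) (1 - t) \<partial>M)
        = (enn_powr A t * enn_powr B (1 - t)) *
          (\<integral>\<^sup>+x. enn_powr (f x * inverse A) t * enn_powr (g x * inverse B) (1 - t) \<partial>M)"
      using 5 inv by (simp add: scale[where C=A and s=t] scale[where C=B and s="1 - t"] nn_integral_cmult mult_ac)
    also have "\<dots> \<le> (enn_powr A t * enn_powr B (1 - t)) * 1"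
      using 5 inv unfolding A_def B_def
      by (intro mult_left_mono nn_integral_Hoelder_normalized) (auto simp: nn_integral_multc)
    finally show ?thesis by (simp add: A_def B_def)
  qed (simp_all add: A_def B_def)
qed

lemma nn_integral_Hoelder3:
  assumes [measurable]: "f \<in> borel_measurable M" "g \<in> borel_measurable M" "h \<in> borel_measurable M"
    and w: "0 \<le> a" "0 \<le> b" "0 \<le> c" "a + b + c = 1"
  shows "(\<integral>\<^sup>+x. enn_powr (f x) a * enn_powr (g x) b * enn_powr (h x) c \<partial>M)
          \<le> enn_powr (\<integral>\<^sup>+x. f x \<partial>M) a * enn_powr (\<integral>\<^sup>+x. g x \<partial>M) b * enn_powr (\<integral>\<^sup>+x. h x \<partial>M) c"
proof (cases "a = 1")
  case True
  then have "b = 0" "c = 0" using w by auto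
  then show ?thesis using True by simp
next
  case False
  define s where "s = 1 - a"
  have s: "0 < s" using w False by (simp add: s_def)
  define k where "k x = enn_powr (g x) (b / s) * enn_powr (h x) (c / s)" for x
  have [measurable]: "k \<in> borel_measurable M" unfolding k_def by measurable
  have bs: "c / s = 1 - b / s" using s w by (simp add: s_def field_simps)
  have ks: "enn_powr (k x) s = enn_powr (g x) b * enn_powr (h x) c" for x
    unfolding k_def using s w by (simp add: enn_powr_mult enn_powr_enn_powr)
  have "(\<integral>\<^sup>+x. enn_powr (f x) a * enn_powr (g x) b * enn_powr (h x) c \<partial>M) = (\<integral>\<^sup>+x. enn_powr (f x) a * enn_powr (k x) (1 - a) \<partial>M)"
    by (simp add: ks[unfolded s_def] mult.assoc)
  also have "\<dots> \<le> enn_powr (\<integral>\<^sup>+x. f x \<partial>M) a * enn_powr (\<integral>\<^sup>+x. k x \<partial>M) (1 - a)"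
    using w by (intro nn_integral_Hoelder) auto
  also have "enn_powr (\<integral>\<^sup>+x. k x \<partial>M) (1 - a) \<le> enn_powr (enn_powr (\<integral>\<^sup>+x. g x \<partial>M) (b / s) * enn_powr (\<integral>\<^sup>+x. h x \<partial>M) (c / s)) (1 - a)"
  proof (intro enn_powr_mono)
    show "(\<integral>\<^sup>+x. k x \<partial>M) \<le> enn_powr (\<integral>\<^sup>+x. g x \<partial>M) (b / s) * enn_powr (\<integral>\<^sup>+x. h x \<partial>M) (c / s)"
      unfolding k_def bs using s w by (intro nn_integral_Hoelder) (auto simp: s_def field_simps)
  qed (use s s_def in auto)
  also have "enn_powr (enn_powr (\<integral>\<^sup>+x. g x \<partial>M) (b / s) * enn_powr (\<integral>\<^sup>+x. h x \<partial>M) (c / s)) (1 - a)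
      = enn_powr (\<integral>\<^sup>+x. g x \<partial>M) b * enn_powr (\<integral>\<^sup>+x. h x \<partial>M) c"
    using s w by (simp add: enn_powr_mult enn_powr_enn_powr s_def[symmetric])
  finally show ?thesis by (simp add: mult_left_mono mult.assoc)
qed

abbreviation enn_Lnorm :: "real \<Rightarrow> ('a::euclidean_space \<Rightarrow> ennreal) \<Rightarrow> ennreal" where
  "enn_Lnorm a f \<equiv> enn_powr (\<integral>\<^sup>+x. enn_powr (f x) a \<partial>lborel) (1 / a)"

lemma enn_powr_enn_Lnorm:
  assumes "0 < r"
  shows "enn_powr (enn_Lnorm r f) r = (\<integral>\<^sup>+x. enn_powr (f x) r \<partial>lborel)"
  using assms by (simp add: enn_powr_enn_powr)

lemma enn_Lnorm_cmult:
  assumes "0 < q" and [measurable]: "f \<in> borel_measurable lborel"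
  shows "enn_Lnorm q (\<lambda>x. c * f x) = c * enn_Lnorm q f"
proof -
  have "(\<integral>\<^sup>+x. enn_powr (c * f x) q \<partial>lborel) = enn_powr c q * (\<integral>\<^sup>+x. enn_powr (f x) q \<partial>lborel)"
    using assms by (simp add: enn_powr_mult nn_integral_cmult)
  then show ?thesis
    using assms by (simp add: enn_powr_mult enn_powr_enn_powr)
qed

lemma enn_Lnorm_mult_le:
  fixes f g :: "'a::euclidean_space \<Rightarrow> ennreal"
  assumes [measurable]: "f \<in> borel_measurable lborel" "g \<in> borel_measurable lborel"
    and pqr: "0 < p" "0 < q" "0 < r" "1 / p + 1 / q = 1 / r"
  shows "enn_Lnorm r (\<lambda>x. f x * g x) \<le> enn_Lnorm p f * enn_Lnorm q g"
proof -
  define \<theta> where "\<theta> = r / p"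
  have "1 - \<theta> = r / q"
    using pqr by (simp add: \<theta>_def field_simps)
  then have \<theta>: "0 \<le> \<theta>" "0 \<le> 1 - \<theta>" "p * \<theta> = r" "q * (1 - \<theta>) = r" "\<theta> * (1 / r) = 1 / p" "(1 - \<theta>) * (1 / r) = 1 / q"
    using pqr by (auto simp: \<theta>_def)
  define F G where "F = (\<integral>\<^sup>+x. enn_powr (f x) p \<partial>lborel)" and "G = (\<integral>\<^sup>+x. enn_powr (g x) q \<partial>lborel)"
  have "(\<integral>\<^sup>+x. enn_powr (f x * g x) r \<partial>lborel)
      = (\<integral>\<^sup>+x. enn_powr (enn_powr (f x) p) \<theta> * enn_powr (enn_powr (g x) q) (1 - \<theta>) \<partial>lborel)"
    using pqr \<theta> by (simp add: enn_powr_mult enn_powr_enn_powr)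
  also have "\<dots> \<le> enn_powr F \<theta> * enn_powr G (1 - \<theta>)"
    unfolding F_def G_def using \<theta> by (intro nn_integral_Hoelder) auto
  finally have "enn_Lnorm r (\<lambda>x. f x * g x) \<le> enn_powr (enn_powr F \<theta> * enn_powr G (1 - \<theta>)) (1 / r)"
    using pqr by (intro enn_powr_mono) auto
  also have "\<dots> = enn_powr (enn_powr F \<theta>) (1 / r) * enn_powr (enn_powr G (1 - \<theta>)) (1 / r)"
    using pqr by (simp add: enn_powr_mult)
  also have "\<dots> = enn_Lnorm p f * enn_Lnorm q g"
    using pqr \<theta> unfolding F_def G_def by (simp only: enn_powr_enn_powr less_imp_le zero_le_divide_1_iff)
  finally show ?thesis .
qed

lemma nn_integral_lborel_translate:
  fixes g :: "'a::euclidean_space \<Rightarrow> ennreal"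
  assumes [measurable]: "g \<in> borel_measurable borel"
  shows "(\<integral>\<^sup>+y. g (y - c) \<partial>lborel) = (\<integral>\<^sup>+y. g y \<partial>lborel)"
proof -
  have "(\<integral>\<^sup>+y. g y \<partial>lborel) = (\<integral>\<^sup>+y. g y \<partial>(density (distr lborel borel (\<lambda>y. - c + 1 *\<^sub>R y)) (\<lambda>_. \<bar>1::real\<bar>^DIM('a))))"
    by (subst lborel_affine[of 1 "- c"]) auto
  also have "\<dots> = (\<integral>\<^sup>+y. g (y - c) \<partial>lborel)"
    by (simp add: nn_integral_density nn_integral_distr)
  finally show ?thesis ..
qed

lemma nn_integral_lborel_reflect:
  fixes g :: "'a::euclidean_space \<Rightarrow> ennreal"
  assumes [measurable]: "g \<in> borel_measurable borel"
  shows "(\<integral>\<^sup>+y. g (x - y) \<partial>lborel) = (\<integral>\<^sup>+y. g y \<partial>lborel)"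
proof -
  have "(\<integral>\<^sup>+y. g y \<partial>lborel) = (\<integral>\<^sup>+y. g y \<partial>(density (distr lborel borel (\<lambda>y. x + (-1) *\<^sub>R y)) (\<lambda>_. \<bar>-1::real\<bar>^DIM('a))))"
    by (subst lborel_affine[of "-1" x]) auto
  also have "\<dots> = (\<integral>\<^sup>+y. g (x - y) \<partial>lborel)"
    by (simp add: nn_integral_density nn_integral_distr)
  finally show ?thesis ..
qed

lemma nn_integral_convolution:
  fixes K f :: "'a::euclidean_space \<Rightarrow> ennreal"
  assumes [measurable]: "K \<in> borel_measurable borel" "f \<in> borel_measurable borel"
  shows "(\<integral>\<^sup>+x. (\<integral>\<^sup>+y. K (x - y) * f y \<partial>lborel) \<partial>lborel) = (\<integral>\<^sup>+z. K z \<partial>lborel) * (\<integral>\<^sup>+y. f y \<partial>lborel)"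
proof -
  have "(\<integral>\<^sup>+x. (\<integral>\<^sup>+y. K (x - y) * f y \<partial>lborel) \<partial>lborel) = (\<integral>\<^sup>+y. (\<integral>\<^sup>+x. K (x - y) * f y \<partial>lborel) \<partial>lborel)"
    by (rule lborel_pair.Fubini'[symmetric]) measurable
  also have "\<dots> = (\<integral>\<^sup>+y. (\<integral>\<^sup>+x. K (x - y) \<partial>lborel) * f y \<partial>lborel)"
    by (intro nn_integral_cong nn_integral_multc) measurable
  also have "\<dots> = (\<integral>\<^sup>+y. (\<integral>\<^sup>+z. K z \<partial>lborel) * f y \<partial>lborel)"
    by (simp add: nn_integral_lborel_translate)
  also have "\<dots> = (\<integral>\<^sup>+z. K z \<partial>lborel) * (\<integral>\<^sup>+y. f y \<partial>lborel)"
    by (rule nn_integral_cmult) measurable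
  finally show ?thesis .
qed

text \<open>The pointwise estimate behind Young's inequality: Hoelder's inequality with the three
  exponents \<open>r\<close>, \<open>m r / (r - m)\<close> and \<open>a r / (r - a)\<close>.\<close>
lemma enn_powr_convolution_le:
  fixes K f :: "'a::euclidean_space \<Rightarrow> ennreal"
  assumes [measurable]: "K \<in> borel_measurable borel" "f \<in> borel_measurable borel"
    and a: "1 \<le> a" and m: "1 \<le> m" and r: "0 < r" and e: "1 / a + 1 / m = 1 + 1 / r"
  shows "enn_powr (\<integral>\<^sup>+y. K (x - y) * f y \<partial>lborel) r
      \<le> (\<integral>\<^sup>+y. enn_powr (K (x - y)) a * enn_powr (f y) m \<partial>lborel)
        * (enn_powr (\<integral>\<^sup>+z. enn_powr (K z) a \<partial>lborel) (r / a - 1) * enn_powr (\<integral>\<^sup>+y. enn_powr (f y) m \<partial>lborel) (r / m - 1))"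
proof -
  define \<alpha> \<beta> \<gamma> where "\<alpha> = 1 / r" and "\<beta> = 1 - 1 / m" and "\<gamma> = 1 - 1 / a"
  have w: "0 \<le> \<alpha>" "0 \<le> \<beta>" "0 \<le> \<gamma>" "\<alpha> + \<beta> + \<gamma> = 1" "r * \<beta> = r / a - 1" "r * \<gamma> = r / m - 1"
    using a m r e by (auto simp: \<alpha>_def \<beta>_def \<gamma>_def field_simps)
  define A where "A = (\<integral>\<^sup>+z. enn_powr (K z) a \<partial>lborel)"
  define F where "F = (\<integral>\<^sup>+y. enn_powr (f y) m \<partial>lborel)"
  have split: "K z * f y = enn_powr (enn_powr (K z) a * enn_powr (f y) m) \<alpha> * enn_powr (enn_powr (K z) a) \<beta> * enn_powr (enn_powr (f y) m) \<gamma>" for z y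
  proof -
    have "enn_powr (enn_powr (K z) a * enn_powr (f y) m) \<alpha> * enn_powr (enn_powr (K z) a) \<beta> * enn_powr (enn_powr (f y) m) \<gamma>
        = enn_powr (K z) (a * \<alpha> + a * \<beta>) * enn_powr (f y) (m * \<alpha> + m * \<gamma>)"
      using w a m by (simp add: enn_powr_mult enn_powr_enn_powr enn_powr_add[symmetric] mult_ac)
    moreover have "a * \<alpha> + a * \<beta> = 1" "m * \<alpha> + m * \<gamma> = 1"
      using a m r e by (auto simp: \<alpha>_def \<beta>_def \<gamma>_def field_simps)
    ultimately show ?thesis by simp
  qed
  have "(\<integral>\<^sup>+y. K (x - y) * f y \<partial>lborel)
      \<le> enn_powr (\<integral>\<^sup>+y. enn_powr (K (x - y)) a * enn_powr (f y) m \<partial>lborel) \<alpha>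
         * enn_powr (\<integral>\<^sup>+y. enn_powr (K (x - y)) a \<partial>lborel) \<beta> * enn_powr F \<gamma>"
    unfolding split F_def by (rule nn_integral_Hoelder3) (use w in auto)
  also have "(\<integral>\<^sup>+y. enn_powr (K (x - y)) a \<partial>lborel) = A"
    unfolding A_def by (rule nn_integral_lborel_reflect) measurable
  finally have "enn_powr (\<integral>\<^sup>+y. K (x - y) * f y \<partial>lborel) r \<le>
      enn_powr (enn_powr (\<integral>\<^sup>+y. enn_powr (K (x - y)) a * enn_powr (f y) m \<partial>lborel) \<alpha> * enn_powr A \<beta> * enn_powr F \<gamma>) r"
    using r by (intro enn_powr_mono) auto
  also have "\<dots> = (\<integral>\<^sup>+y. enn_powr (K (x - y)) a * enn_powr (f y) m \<partial>lborel) * (enn_powr A (r * \<beta>) * enn_powr F (r * \<gamma>))"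
    using w r by (simp add: enn_powr_mult enn_powr_enn_powr \<alpha>_def mult_ac)
  finally show ?thesis unfolding A_def F_def w(5,6) .
qed

lemma nn_integral_convolution_Young:
  fixes K f :: "'a::euclidean_space \<Rightarrow> ennreal"
  assumes [measurable]: "K \<in> borel_measurable borel" "f \<in> borel_measurable borel"
    and a: "1 \<le> a" and m: "1 \<le> m" and r: "0 < r" and e: "1 / a + 1 / m = 1 + 1 / r"
  shows "enn_Lnorm r (\<lambda>x. \<integral>\<^sup>+y. K (x - y) * f y \<partial>lborel) \<le> enn_Lnorm a K * enn_Lnorm m f"
proof -
  define A where "A = (\<integral>\<^sup>+z. enn_powr (K z) a \<partial>lborel)"
  define F where "F = (\<integral>\<^sup>+y. enn_powr (f y) m \<partial>lborel)"
  have "1 / m \<le> 1" "1 / a \<le> 1"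
    using a m by auto
  then have "1 / r \<le> 1 / a" "1 / r \<le> 1 / m"
    using e by linarith+
  then have ra: "0 \<le> r / a - 1" "0 \<le> r / m - 1"
    using a m r by (simp_all add: field_simps)
  have AF: "(\<integral>\<^sup>+x. (\<integral>\<^sup>+y. enn_powr (K (x - y)) a * enn_powr (f y) m \<partial>lborel) \<partial>lborel) = A * F"
    unfolding A_def F_def by (rule nn_integral_convolution) measurable
  have "(\<integral>\<^sup>+x. enn_powr (\<integral>\<^sup>+y. K (x - y) * f y \<partial>lborel) r \<partial>lborel)
      \<le> (\<integral>\<^sup>+x. (\<integral>\<^sup>+y. enn_powr (K (x - y)) a * enn_powr (f y) m \<partial>lborel) * (enn_powr A (r / a - 1) * enn_powr F (r / m - 1)) \<partial>lborel)"
    unfolding A_def F_def by (intro nn_integral_mono enn_powr_convolution_le) (use assms in auto)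
  also have "\<dots> = (A * F) * (enn_powr A (r / a - 1) * enn_powr F (r / m - 1))"
    by (simp add: nn_integral_multc AF)
  also have "\<dots> = (A * enn_powr A (r / a - 1)) * (F * enn_powr F (r / m - 1))"
    by (simp add: mult_ac)
  also have "\<dots> = enn_powr A (r / a) * enn_powr F (r / m)"
    using enn_powr_add[OF zero_le_one ra(1), of A] enn_powr_add[OF zero_le_one ra(2), of F] by simp
  finally have "enn_Lnorm r (\<lambda>x. \<integral>\<^sup>+y. K (x - y) * f y \<partial>lborel) \<le> enn_powr (enn_powr A (r / a) * enn_powr F (r / m)) (1 / r)"
    using r by (intro enn_powr_mono) auto
  also have "\<dots> = enn_Lnorm a K * enn_Lnorm m f"
    unfolding A_def F_def using a m r by (simp add: enn_powr_mult enn_powr_enn_powr)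
  finally show ?thesis .
qed

lemma nn_integral_weighted_Hoelder:
  fixes F :: "real \<Rightarrow> ennreal" and w :: "real \<Rightarrow> real"
  assumes [measurable]: "F \<in> borel_measurable borel" "w \<in> borel_measurable borel" "I \<in> sets borel"
    and wpos: "\<And>s. s \<in> I \<Longrightarrow> 0 < w s" and r: "1 \<le> r"
  shows "enn_powr (\<integral>\<^sup>+s. F s * indicator I s \<partial>lborel) r
     \<le> enn_powr (\<integral>\<^sup>+s. ennreal (w s) * indicator I s \<partial>lborel) (r - 1) *
        (\<integral>\<^sup>+s. enn_powr (F s) r * ennreal (w s powr (1 - r)) * indicator I s \<partial>lborel)"
proof -
  define \<theta> where "\<theta> = 1 / r"
  have th: "0 < \<theta>" "\<theta> \<le> 1" "\<theta> * r = 1" "(1 - \<theta>) * r = r - 1" using r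
    by (auto simp: \<theta>_def field_simps)
  define \<phi> where "\<phi> s = enn_powr (F s) r * ennreal (w s powr (1 - r)) * indicator I s" for s
  define \<psi> where "\<psi> s = ennreal (w s) * indicator I s" for s
  have [measurable]: "\<phi> \<in> borel_measurable borel" "\<psi> \<in> borel_measurable borel"
    unfolding \<phi>_def \<psi>_def by measurable
  have pw: "F s * indicator I s = enn_powr (\<phi> s) \<theta> * enn_powr (\<psi> s) (1 - \<theta>)" for s
  proof (cases "s \<in> I")
    case False
    then show ?thesis using th by (simp add: \<phi>_def \<psi>_def)
  next
    case True
    have ws: "0 < w s" using wpos True by auto
    have "(w s powr (1 - r)) powr \<theta> * w s powr (1 - \<theta>) = 1"
      using ws r by (simp add: powr_powr powr_add[symmetric] \<theta>_def field_simps)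
    then have weights: "enn_powr (ennreal (w s powr (1 - r))) \<theta> * enn_powr (ennreal (w s)) (1 - \<theta>) = 1"
      using ws by (simp add: enn_powr_ennreal_pos ennreal_mult[symmetric])
    have "enn_powr (\<phi> s) \<theta> * enn_powr (\<psi> s) (1 - \<theta>)
       = enn_powr (enn_powr (F s) r) \<theta> * (enn_powr (ennreal (w s powr (1 - r))) \<theta> * enn_powr (ennreal (w s)) (1 - \<theta>))"
      using True th by (simp add: \<phi>_def \<psi>_def enn_powr_mult mult_ac)
    also have "\<dots> = F s"
      using weights th r by (simp add: enn_powr_enn_powr mult.commute)
    finally show ?thesis using True by simp
  qed
  have "enn_powr (\<integral>\<^sup>+s. F s * indicator I s \<partial>lborel) r \<le>
        enn_powr (enn_powr (\<integral>\<^sup>+s. \<phi> s \<partial>lborel) \<theta> * enn_powr (\<integral>\<^sup>+s. \<psi> s \<partial>lborel) (1 - \<theta>)) r"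
    unfolding pw using th r by (intro enn_powr_mono nn_integral_Hoelder) auto
  also have "\<dots> = (\<integral>\<^sup>+s. \<phi> s \<partial>lborel) * enn_powr (\<integral>\<^sup>+s. \<psi> s \<partial>lborel) (r - 1)"
    using th r by (simp add: enn_powr_mult enn_powr_enn_powr)
  finally show ?thesis by (simp add: \<phi>_def \<psi>_def mult.commute)
qed

lemma nn_integral_time_convolution_Young:
  fixes K g :: "real \<Rightarrow> 'a::euclidean_space \<Rightarrow> ennreal" and k G :: "real \<Rightarrow> real"
  assumes [measurable]: "case_prod K \<in> borel_measurable (lborel \<Otimes>\<^sub>M lborel)"
    "case_prod g \<in> borel_measurable (lborel \<Otimes>\<^sub>M lborel)"
    "k \<in> borel_measurable borel" "G \<in> borel_measurable borel" "I \<in> sets borel"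
    and a: "1 \<le> a" and m: "1 \<le> m" and r: "1 \<le> r" and e: "1 / a + 1 / m = 1 + 1 / r"
    and kpos: "\<And>s. s \<in> I \<Longrightarrow> 0 < k s" and Gpos: "\<And>s. s \<in> I \<Longrightarrow> 0 < G s"
    and kb: "\<And>s. s \<in> I \<Longrightarrow> enn_Lnorm a (K s) \<le> ennreal (k s)"
    and gb: "AE s in lborel. s \<in> I \<longrightarrow> enn_Lnorm m (g s) \<le> ennreal (G s)"
  shows "enn_Lnorm r (\<lambda>x. \<integral>\<^sup>+s. (\<integral>\<^sup>+y. K s (x - y) * g s y \<partial>lborel) * indicator I s \<partial>lborel)
      \<le> (\<integral>\<^sup>+s. ennreal (k s * G s) * indicator I s \<partial>lborel)"
proof -
  define w where "w s = k s * G s" for s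
  have [measurable]: "w \<in> borel_measurable borel" unfolding w_def by measurable
  have wpos: "s \<in> I \<Longrightarrow> 0 < w s" for s using kpos Gpos by (simp add: w_def)
  define W where "W = (\<integral>\<^sup>+s. ennreal (w s) * indicator I s \<partial>lborel)"
  define F where "F x s = (\<integral>\<^sup>+y. K s (x - y) * g s y \<partial>lborel)" for x s
  have [measurable]: "case_prod F \<in> borel_measurable (lborel \<Otimes>\<^sub>M lborel)" "F x \<in> borel_measurable borel" for x
    unfolding F_def by measurable
  have slice: "(\<integral>\<^sup>+x. enn_powr (F x s) r * ennreal (w s powr (1 - r)) * indicator I s \<partial>lborel)
      \<le> ennreal (w s) * indicator I s" if "s \<in> I \<longrightarrow> enn_Lnorm m (g s) \<le> ennreal (G s)" for s
  proof (cases "s \<in> I")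
    case True
    have "enn_Lnorm r (\<lambda>x. F x s) \<le> enn_Lnorm a (K s) * enn_Lnorm m (g s)"
      unfolding F_def using a m r e by (intro nn_integral_convolution_Young) auto
    also have "\<dots> \<le> ennreal (k s) * ennreal (G s)"
      using kb[OF True] that True by (intro mult_mono) auto
    also have "\<dots> = ennreal (w s)"
      using kpos[OF True] Gpos[OF True] by (simp add: w_def ennreal_mult)
    finally have "(\<integral>\<^sup>+x. enn_powr (F x s) r \<partial>lborel) \<le> enn_powr (ennreal (w s)) r"
      using r enn_powr_mono[of _ _ r] by (fastforce simp: enn_powr_enn_Lnorm)
    then have "(\<integral>\<^sup>+x. enn_powr (F x s) r \<partial>lborel) * ennreal (w s powr (1 - r))
        \<le> ennreal (w s powr r) * ennreal (w s powr (1 - r))"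
      using wpos[OF True] r by (intro mult_right_mono) (auto simp: enn_powr_ennreal)
    also have "\<dots> = ennreal (w s)"
      using wpos[OF True] by (simp add: ennreal_mult[symmetric] powr_add[symmetric])
    finally show ?thesis
      using True by (simp add: nn_integral_multc)
  qed simp
  have "(\<integral>\<^sup>+x. enn_powr (\<integral>\<^sup>+s. F x s * indicator I s \<partial>lborel) r \<partial>lborel)
      \<le> (\<integral>\<^sup>+x. enn_powr W (r - 1) * (\<integral>\<^sup>+s. enn_powr (F x s) r * ennreal (w s powr (1 - r)) * indicator I s \<partial>lborel) \<partial>lborel)"
    unfolding W_def by (intro nn_integral_mono nn_integral_weighted_Hoelder wpos r) measurable
  also have "\<dots> = enn_powr W (r - 1) * (\<integral>\<^sup>+s. (\<integral>\<^sup>+x. enn_powr (F x s) r * ennreal (w s powr (1 - r)) * indicator I s \<partial>lborel) \<partial>lborel)"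
    by (subst lborel_pair.Fubini') (measurable, rule nn_integral_cmult, measurable)
  also have "\<dots> \<le> enn_powr W (r - 1) * W"
    unfolding W_def using gb by (intro mult_left_mono nn_integral_mono_AE) (auto elim!: AE_mp intro: slice)
  also have "\<dots> = enn_powr W r"
    using r enn_powr_add[of "r - 1" 1 W] by simp
  finally have "enn_Lnorm r (\<lambda>x. \<integral>\<^sup>+s. F x s * indicator I s \<partial>lborel) \<le> enn_powr (enn_powr W r) (1 / r)"
    using r by (intro enn_powr_mono) auto
  then show ?thesis
    using r by (simp add: enn_powr_enn_powr F_def W_def w_def)
qed

section \<open>The gradient of the heat kernel\<close>

lemma heat_kernel_nonneg: "0 \<le> heat_kernel t x"
  by (simp add: heat_kernel_def)

lemma measurable_grad_heat_kernel[measurable (raw)]: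
  assumes [measurable]: "f \<in> borel_measurable M" "g \<in> borel_measurable M"
  shows "(\<lambda>x. grad_heat_kernel (f x) (g x) :: real^'d) \<in> borel_measurable M"
  unfolding grad_heat_kernel_def heat_kernel_def by measurable

lemma norm_grad_heat_kernel:
  assumes "0 < r"
  shows "norm (grad_heat_kernel r x) = heat_kernel r x * norm x / (2 * r)"
  using assms heat_kernel_nonneg[of r x]
  by (simp add: grad_heat_kernel_def abs_mult)

lemma norm_grad_heat_kernel_scaleR:
  fixes y :: "real^'d"
  assumes r: "0 < r"
  shows "norm (grad_heat_kernel r (sqrt r *\<^sub>R y))
       = r powr (- (real CARD('d) + 1) / 2) * norm (grad_heat_kernel 1 y)"
proof -
  define n where "n = real CARD('d)"
  have nr: "(norm (sqrt r *\<^sub>R y))\<^sup>2 = r * (norm y)\<^sup>2" using r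
    by (simp add: power_mult_distrib)
  have hk: "heat_kernel r (sqrt r *\<^sub>R y) = r powr (- n / 2) * heat_kernel 1 y"
    unfolding heat_kernel_def n_def[symmetric] nr using r
    by (simp add: powr_mult)
  have "norm (grad_heat_kernel r (sqrt r *\<^sub>R y)) = r powr (- n / 2) * heat_kernel 1 y * (sqrt r * norm y) / (2 * r)"
    using r by (simp add: norm_grad_heat_kernel hk)
  also have "\<dots> = (r powr (- n / 2) * sqrt r / r) * (heat_kernel 1 y * norm y / 2)"
    using r by (simp add: field_simps)
  also have "r powr (- n / 2) * sqrt r / r = r powr (- (n + 1) / 2)"
  proof -
    have s1: "sqrt r = r powr (1/2)" using r by (simp add: powr_half_sqrt)
    have s2: "r powr (-1) = 1 / r" using r by (simp add: powr_neg_one)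
    have "r powr (- n / 2) * sqrt r / r = r powr (- n / 2) * r powr (1/2) * r powr (-1)"
      unfolding s1 s2 by simp
    also have "\<dots> = r powr (- n / 2 + 1/2 + (-1))" by (simp only: powr_add[symmetric])
    also have "- n / 2 + 1/2 + (-1) = - (n + 1) / 2" by (simp add: field_simps)
    finally show ?thesis .
  qed
  finally show ?thesis by (simp add: norm_grad_heat_kernel n_def)
qed

lemma nn_integral_grad_heat_kernel_scaling:
  assumes a: "0 < a" and r: "0 < r"
  shows "(\<integral>\<^sup>+z. enn_powr (ennreal (norm (grad_heat_kernel r (z::real^'d)))) a \<partial>lborel)
     = ennreal (r powr (real CARD('d) / 2 - a * (real CARD('d) + 1) / 2)) *
       (\<integral>\<^sup>+y. enn_powr (ennreal (norm (grad_heat_kernel 1 (y::real^'d)))) a \<partial>lborel)"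
proof -
  define n where "n = real CARD('d)"
  define f where "f z = enn_powr (ennreal (norm (grad_heat_kernel r (z::real^'d)))) a" for z
  have [measurable]: "f \<in> borel_measurable borel" unfolding f_def by measurable
  have sr: "sqrt r \<noteq> 0" using r by simp
  have "(\<integral>\<^sup>+z. f z \<partial>lborel) = (\<integral>\<^sup>+z. f z \<partial>(density (distr lborel borel (\<lambda>y. 0 + sqrt r *\<^sub>R y)) (\<lambda>_. \<bar>sqrt r\<bar>^DIM(real^'d))))"
    by (subst lborel_affine[OF sr, of 0]) rule
  also have "\<dots> = (\<integral>\<^sup>+y. ennreal (sqrt r ^ CARD('d)) * f (sqrt r *\<^sub>R y) \<partial>lborel)"
    using r by (simp add: nn_integral_density nn_integral_distr)
  also have "\<dots> = (\<integral>\<^sup>+y. ennreal (r powr (n / 2 - a * (n + 1) / 2)) * enn_powr (ennreal (norm (grad_heat_kernel 1 (y::real^'d)))) a \<partial>lborel)"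
  proof (intro nn_integral_cong)
    fix y :: "real^'d"
    have "f (sqrt r *\<^sub>R y) = enn_powr (ennreal (r powr (- (n + 1) / 2))) a * enn_powr (ennreal (norm (grad_heat_kernel 1 y))) a"
      unfolding f_def norm_grad_heat_kernel_scaleR[OF r] n_def using a by (simp add: ennreal_mult enn_powr_mult)
    also have "\<dots> = ennreal (r powr (- (n + 1) / 2 * a)) * enn_powr (ennreal (norm (grad_heat_kernel 1 y))) a"
      using a by (simp add: enn_powr_ennreal powr_powr)
    finally have 1: "f (sqrt r *\<^sub>R y) = ennreal (r powr (- (n + 1) / 2 * a)) * enn_powr (ennreal (norm (grad_heat_kernel 1 y))) a" .
    have 2: "sqrt r ^ CARD('d) = r powr (n / 2)"
    proof -
      have "sqrt r ^ CARD('d) = (r powr (1/2)) ^ CARD('d)" using r by (simp add: powr_half_sqrt)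
      also have "\<dots> = (r powr (1/2)) powr (real CARD('d))" using r by (simp add: powr_realpow)
      also have "\<dots> = r powr (n / 2)" by (simp add: powr_powr n_def)
      finally show ?thesis .
    qed
    have 3: "r powr (n / 2) * r powr (- (n + 1) / 2 * a) = r powr (n / 2 - a * (n + 1) / 2)"
      by (simp add: powr_add[symmetric] field_simps)
    show "ennreal (sqrt r ^ CARD('d)) * f (sqrt r *\<^sub>R y) = ennreal (r powr (n / 2 - a * (n + 1) / 2)) * enn_powr (ennreal (norm (grad_heat_kernel 1 y))) a"
      unfolding 1 2 using r by (simp add: 3[symmetric] ennreal_mult mult.assoc)
  qed
  also have "\<dots> = ennreal (r powr (n / 2 - a * (n + 1) / 2)) * (\<integral>\<^sup>+y. enn_powr (ennreal (norm (grad_heat_kernel 1 (y::real^'d)))) a \<partial>lborel)"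
    by (rule nn_integral_cmult) measurable
  finally show ?thesis unfolding f_def n_def .
qed

lemma nn_integral_gaussian_real_finite:
  assumes b: "0 < b"
  shows "(\<integral>\<^sup>+t. ennreal (exp (- b * t\<^sup>2)) \<partial>lborel) < \<infinity>"
proof -
  define \<sigma> where "\<sigma> = sqrt (1 / (2 * b))"
  have s2: "2 * \<sigma>\<^sup>2 = 1 / b" using b by (simp add: \<sigma>_def)
  define c where "c = sqrt (2 * pi * \<sigma>\<^sup>2)"
  have eq: "exp (- b * t\<^sup>2) = c * normal_density 0 \<sigma> t" for t
  proof -
    have "c > 0" using b by (simp add: c_def \<sigma>_def)
    moreover have "- (t - 0)\<^sup>2 / (2 * \<sigma>\<^sup>2) = - b * t\<^sup>2" unfolding s2 using b by (simp add: field_simps)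
    ultimately show ?thesis by (simp add: normal_density_def c_def[symmetric])
  qed
  have "(\<integral>\<^sup>+t. ennreal (normal_density 0 \<sigma> t) \<partial>lborel) < \<infinity>"
  proof -
    have "integrable lborel (normal_density 0 \<sigma>)" by (rule integrable_normal_density) (use b in \<open>simp add: \<sigma>_def\<close>)
    then have "(\<integral>\<^sup>+t. ennreal (norm (normal_density 0 \<sigma> t)) \<partial>lborel) < \<infinity>"
      unfolding integrable_iff_bounded by simp
    then show ?thesis by simp
  qed
  then have "ennreal c * (\<integral>\<^sup>+t. ennreal (normal_density 0 \<sigma> t) \<partial>lborel) < \<infinity>"
    by (simp add: ennreal_mult_less_top)
  also have "ennreal c * (\<integral>\<^sup>+t. ennreal (normal_density 0 \<sigma> t) \<partial>lborel) = (\<integral>\<^sup>+t. ennreal (exp (- b * t\<^sup>2)) \<partial>lborel)"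
  proof -
    have "c \<ge> 0" by (simp add: c_def)
    then have "\<And>t. ennreal (exp (- b * t\<^sup>2)) = ennreal c * ennreal (normal_density 0 \<sigma> t)"
      by (subst eq) (simp add: ennreal_mult)
    then show ?thesis by (simp add: nn_integral_cmult)
  qed
  finally show ?thesis .
qed

lemma nn_integral_gaussian_finite:
  assumes b: "0 < b"
  shows "(\<integral>\<^sup>+y. ennreal (exp (- b * (norm (y::'a::euclidean_space))\<^sup>2)) \<partial>lborel) < \<infinity>"
proof -
  have "(\<integral>\<^sup>+y. ennreal (exp (- b * (norm (y::'a))\<^sup>2)) \<partial>lborel)
      = (\<integral>\<^sup>+y. (\<Prod>i\<in>Basis. (\<lambda>i t. ennreal (exp (- b * t\<^sup>2))) i ((y::'a) \<bullet> i)) \<partial>lborel)"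
  proof (intro nn_integral_cong)
    fix y :: 'a
    have "(norm y)\<^sup>2 = (\<Sum>i\<in>Basis. (y \<bullet> i)\<^sup>2)"
      by (metis (no_types, lifting) euclidean_inner power2_eq_square power2_norm_eq_inner sum.cong)
    then have "exp (- b * (norm y)\<^sup>2) = (\<Prod>i\<in>Basis. exp (- b * (y \<bullet> i)\<^sup>2))"
      by (simp add: sum_distrib_left exp_sum)
    then show "ennreal (exp (- b * (norm y)\<^sup>2)) = (\<Prod>i\<in>Basis. (\<lambda>i t. ennreal (exp (- b * t\<^sup>2))) i (y \<bullet> i))"
      by (simp add: prod_ennreal)
  qed
  also have "\<dots> = (\<Prod>i\<in>(Basis::'a set). (\<integral>\<^sup>+t. ennreal (exp (- b * t\<^sup>2)) \<partial>lborel))"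
    by (rule nn_integral_lborel_prod) auto
  also have "\<dots> = (\<integral>\<^sup>+t. ennreal (exp (- b * t\<^sup>2)) \<partial>lborel) ^ DIM('a)"
    by simp
  also have "\<dots> < \<infinity>" using nn_integral_gaussian_real_finite[OF b] by (simp add: power_less_top_ennreal)
  finally show ?thesis .
qed

lemma le_two_exp_square_div_8: "(u::real) \<le> 2 * exp (u\<^sup>2 / 8)"
proof -
  have "1 + u\<^sup>2 / 8 \<le> exp (u\<^sup>2 / 8)" by (rule exp_ge_add_one_self)
  moreover have "u \<le> 2 * (1 + u\<^sup>2 / 8)"
    using sum_squares_ge_zero[of "u - 2" 0] by (simp add: power2_eq_square algebra_simps)
  ultimately show ?thesis by (smt (verit))
qed

lemma norm_grad_heat_kernel_1_le:
  "norm (grad_heat_kernel 1 (y::real^'d)) \<le> (4 * pi) powr (- real CARD('d) / 2) * exp (- (norm y)\<^sup>2 / 8)"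
proof -
  have "norm (grad_heat_kernel 1 y) = (4 * pi) powr (- real CARD('d) / 2) * (exp (- (norm y)\<^sup>2 / 4) * norm y / 2)"
    by (simp add: norm_grad_heat_kernel heat_kernel_def)
  also have "exp (- (norm y)\<^sup>2 / 4) * norm y / 2 \<le> exp (- (norm y)\<^sup>2 / 8)"
  proof -
    have "exp (- (norm y)\<^sup>2 / 4) * norm y \<le> exp (- (norm y)\<^sup>2 / 4) * (2 * exp ((norm y)\<^sup>2 / 8))"
      by (intro mult_left_mono le_two_exp_square_div_8) simp
    also have "\<dots> = 2 * exp (- (norm y)\<^sup>2 / 8)"
      by (simp add: exp_add[symmetric])
    finally show ?thesis by simp
  qed
  finally show ?thesis by (simp add: mult_left_mono)
qed

lemma nn_integral_grad_heat_kernel_1_finite: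
  assumes a: "0 < a"
  shows "(\<integral>\<^sup>+y. enn_powr (ennreal (norm (grad_heat_kernel 1 (y::real^'d)))) a \<partial>lborel) < \<infinity>"
proof -
  define c where "c = (4 * pi) powr (- real CARD('d) / 2)"
  have "(\<integral>\<^sup>+y. enn_powr (ennreal (norm (grad_heat_kernel 1 (y::real^'d)))) a \<partial>lborel)
      \<le> (\<integral>\<^sup>+y. ennreal (c powr a) * ennreal (exp (- (a / 8) * (norm (y::real^'d))\<^sup>2)) \<partial>lborel)"
  proof (intro nn_integral_mono)
    fix y :: "real^'d"
    have "enn_powr (ennreal (norm (grad_heat_kernel 1 y))) a \<le> enn_powr (ennreal (c * exp (- (norm y)\<^sup>2 / 8))) a"
      using a norm_grad_heat_kernel_1_le[of y] by (intro enn_powr_mono ennreal_leI) (auto simp: c_def)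
    also have "\<dots> = ennreal ((c * exp (- (norm y)\<^sup>2 / 8)) powr a)"
      using a by (simp add: enn_powr_ennreal c_def)
    also have "(c * exp (- (norm y)\<^sup>2 / 8)) powr a = c powr a * exp (- (a / 8) * (norm y)\<^sup>2)"
    proof -
      have "(c * exp (- (norm y)\<^sup>2 / 8)) powr a = c powr a * exp (- (norm y)\<^sup>2 / 8) powr a"
        using powr_mult by (auto simp: c_def)
      also have "exp (- (norm y)\<^sup>2 / 8) powr a = exp (- (a / 8) * (norm y)\<^sup>2)"
        by (simp add: powr_def)
      finally show ?thesis .
    qed
    finally show "enn_powr (ennreal (norm (grad_heat_kernel 1 y))) a \<le> ennreal (c powr a) * ennreal (exp (- (a / 8) * (norm y)\<^sup>2))"
      by (simp add: ennreal_mult)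
  qed
  also have "\<dots> = ennreal (c powr a) * (\<integral>\<^sup>+y. ennreal (exp (- (a / 8) * (norm (y::real^'d))\<^sup>2)) \<partial>lborel)"
    by (rule nn_integral_cmult) measurable
  also have "\<dots> < \<infinity>" using nn_integral_gaussian_finite[of "a / 8", where 'a="real^'d"] a by (simp add: ennreal_mult_less_top)
  finally show ?thesis .
qed

lemma Lnorm_grad_heat_kernel_le:
  assumes a: "0 < a"
  obtains c where "c > 0" "\<And>r. 0 < r \<Longrightarrow>
     enn_Lnorm a (\<lambda>z::real^'d. ennreal (norm (grad_heat_kernel r z)))
       \<le> ennreal (c * r powr (real CARD('d) / (2 * a) - (real CARD('d) + 1) / 2))"
proof -
  define J where "J = (\<integral>\<^sup>+y. enn_powr (ennreal (norm (grad_heat_kernel 1 (y::real^'d)))) a \<partial>lborel)"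
  define M where "M = max 1 (enn2real J)"
  have Jf: "J < \<infinity>" unfolding J_def by (rule nn_integral_grad_heat_kernel_1_finite[OF a])
  have JM: "J \<le> ennreal M"
  proof -
    have "J = ennreal (enn2real J)" using Jf by (simp add: ennreal_enn2real_if less_top)
    also have "\<dots> \<le> ennreal M" unfolding M_def by (rule ennreal_leI) simp
    finally show ?thesis .
  qed
  have M: "M > 0" by (simp add: M_def)
  define e where "e = real CARD('d) / 2 - a * (real CARD('d) + 1) / 2"
  show ?thesis
  proof
    show "M powr (1 / a) > 0" using M by simp
    fix r :: real assume r: "0 < r"
    have "enn_powr (\<integral>\<^sup>+z. enn_powr (ennreal (norm (grad_heat_kernel r (z::real^'d)))) a \<partial>lborel) (1 / a)
        = enn_powr (ennreal (r powr e) * J) (1 / a)"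
      by (simp add: nn_integral_grad_heat_kernel_scaling[OF a r] J_def e_def)
    also have "\<dots> \<le> enn_powr (ennreal (r powr e * M)) (1 / a)"
    proof (intro enn_powr_mono)
      have "ennreal (r powr e) * J \<le> ennreal (r powr e) * ennreal M" using JM by (rule mult_left_mono) simp
      then show "ennreal (r powr e) * J \<le> ennreal (r powr e * M)" using M by (simp add: ennreal_mult)
    qed (use a in simp)
    also have "\<dots> = ennreal ((r powr e * M) powr (1 / a))"
      using a M by (intro enn_powr_ennreal) auto
    also have "(r powr e * M) powr (1 / a) = M powr (1 / a) * r powr (e / a)"
      using r M by (simp add: powr_mult powr_powr)
    also have "e / a = real CARD('d) / (2 * a) - (real CARD('d) + 1) / 2"
      using a by (simp add: e_def field_simps)
    finally show "enn_Lnorm a (\<lambda>z::real^'d. ennreal (norm (grad_heat_kernel r z)))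
       \<le> ennreal (M powr (1 / a) * r powr (real CARD('d) / (2 * a) - (real CARD('d) + 1) / 2))" .
  qed
qed

section \<open>Beta integrals\<close>

lemma nn_integral_powr_interval:
  assumes b: "b > -1" and s: "0 \<le> s"
  shows "(\<integral>\<^sup>+x. ennreal (indicator {0..s} x * x powr b) \<partial>lborel) = ennreal (s powr (b + 1) / (b + 1))"
  using nn_integral_has_integral_lebesgue[OF _ has_integral_powr_from_0[OF b s]] by simp

lemma nn_integral_powr_interval_reflected:
  assumes b: "b > -1" and s: "0 \<le> s"
  shows "(\<integral>\<^sup>+x. ennreal (indicator {0..s} x * (s - x) powr b) \<partial>lborel) = ennreal (s powr (b + 1) / (b + 1))"
proof -
  have "(\<integral>\<^sup>+x. ennreal (indicator {0..s} x * x powr b) \<partial>lborel)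
      = ennreal \<bar>-1\<bar> * (\<integral>\<^sup>+x. ennreal (indicator {0..s} (s + (-1) * x) * (s + (-1) * x) powr b) \<partial>lborel)"
    by (rule nn_integral_real_affine) auto
  also have "(\<lambda>x. indicator {0..s} (s + (-1) * x) :: real) = indicator {0..s}"
    by (auto simp: indicator_def fun_eq_iff)
  finally show ?thesis using nn_integral_powr_interval[OF b s] by simp
qed

lemma powr_le_on_upper_half:
  fixes v s \<gamma> :: real
  assumes "s / 2 \<le> v" "v \<le> s" "0 < s"
  shows "v powr \<gamma> \<le> max 1 (2 powr (- \<gamma>)) * s powr \<gamma>"
proof (cases "\<gamma> \<ge> 0")
  case True
  then have "v powr \<gamma> \<le> s powr \<gamma>" using assms by (intro powr_mono2) auto
  also have "\<dots> \<le> max 1 (2 powr (- \<gamma>)) * s powr \<gamma>"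
    using mult_right_mono[of 1 "max 1 (2 powr (- \<gamma>))" "s powr \<gamma>"] by simp
  finally show ?thesis .
next
  case False
  have "v powr \<gamma> \<le> (s / 2) powr \<gamma>" using assms False by (intro powr_mono2') auto
  also have "\<dots> = 2 powr (- \<gamma>) * s powr \<gamma>"
    unfolding powr_divide by (simp only: powr_minus divide_inverse mult.commute)
  also have "\<dots> \<le> max 1 (2 powr (- \<gamma>)) * s powr \<gamma>" by (intro mult_right_mono) auto
  finally show ?thesis .
qed

text \<open>Split at \<open>s / 2\<close>: on each half one of the two factors is comparable to a power of \<open>s\<close>.\<close>
lemma nn_integral_beta_kernel_le:
  assumes al: "\<alpha> > -1" and be: "\<beta> > -1"
  obtains C where "C > 0" "\<And>s. 0 < s \<Longrightarrow>
    (\<integral>\<^sup>+\<sigma>. ennreal ((s - \<sigma>) powr \<alpha> * \<sigma> powr \<beta>) * indicator {0<..<s} \<sigma> \<partial>lborel) \<le> ennreal (C * s powr (1 + \<alpha> + \<beta>))"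
proof -
  define ma where "ma = max 1 (2 powr (- \<alpha>))"
  define mb where "mb = max 1 (2 powr (- \<beta>))"
  define C where "C = ma / (\<beta> + 1) + mb / (\<alpha> + 1)"
  have ma: "ma > 0" "mb > 0" by (auto simp: ma_def mb_def)
  show ?thesis
  proof
    have "0 < ma / (\<beta> + 1)" "0 < mb / (\<alpha> + 1)" using ma al be by simp_all
    then show "C > 0" by (simp add: C_def)
    fix s :: real assume s: "0 < s"
    have pw: "ennreal ((s - \<sigma>) powr \<alpha> * \<sigma> powr \<beta>) * indicator {0<..<s} \<sigma>
        \<le> ennreal (ma * s powr \<alpha>) * ennreal (indicator {0..s} \<sigma> * \<sigma> powr \<beta>)
          + ennreal (mb * s powr \<beta>) * ennreal (indicator {0..s} \<sigma> * (s - \<sigma>) powr \<alpha>)" for \<sigma>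
    proof (cases "\<sigma> \<in> {0<..<s}")
      case False then show ?thesis by simp
    next
      case True
      show ?thesis
      proof (cases "\<sigma> \<le> s / 2")
        case le: True
        have "(s - \<sigma>) powr \<alpha> \<le> ma * s powr \<alpha>"
          unfolding ma_def using True le by (intro powr_le_on_upper_half) auto
        then have "(s - \<sigma>) powr \<alpha> * \<sigma> powr \<beta> \<le> (ma * s powr \<alpha>) * \<sigma> powr \<beta>"
          by (rule mult_right_mono) simp
        then have "ennreal ((s - \<sigma>) powr \<alpha> * \<sigma> powr \<beta>) * indicator {0<..<s} \<sigma>
            \<le> ennreal (ma * s powr \<alpha>) * ennreal (indicator {0..s} \<sigma> * \<sigma> powr \<beta>)"
          using True ma by (simp add: ennreal_mult[symmetric] ennreal_leI)
        then show ?thesis by (rule order_trans) simp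
      next
        case gt: False
        have "\<sigma> powr \<beta> \<le> mb * s powr \<beta>"
          unfolding mb_def using True gt by (intro powr_le_on_upper_half) auto
        then have "(s - \<sigma>) powr \<alpha> * \<sigma> powr \<beta> \<le> (s - \<sigma>) powr \<alpha> * (mb * s powr \<beta>)"
          by (rule mult_left_mono) simp
        then have "ennreal ((s - \<sigma>) powr \<alpha> * \<sigma> powr \<beta>) * indicator {0<..<s} \<sigma>
            \<le> ennreal (mb * s powr \<beta>) * ennreal (indicator {0..s} \<sigma> * (s - \<sigma>) powr \<alpha>)"
          using True ma by (simp add: ennreal_mult[symmetric] ennreal_leI mult.commute)
        then show ?thesis by (rule order_trans) simp
      qed
    qed
    have "(\<integral>\<^sup>+\<sigma>. ennreal ((s - \<sigma>) powr \<alpha> * \<sigma> powr \<beta>) * indicator {0<..<s} \<sigma> \<partial>lborel)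
      \<le> (\<integral>\<^sup>+\<sigma>. ennreal (ma * s powr \<alpha>) * ennreal (indicator {0..s} \<sigma> * \<sigma> powr \<beta>)
          + ennreal (mb * s powr \<beta>) * ennreal (indicator {0..s} \<sigma> * (s - \<sigma>) powr \<alpha>) \<partial>lborel)"
      by (intro nn_integral_mono pw)
    also have "\<dots> = ennreal (ma * s powr \<alpha>) * ennreal (s powr (\<beta> + 1) / (\<beta> + 1))
        + ennreal (mb * s powr \<beta>) * ennreal (s powr (\<alpha> + 1) / (\<alpha> + 1))"
      using s al be by (simp add: nn_integral_add nn_integral_cmult nn_integral_powr_interval nn_integral_powr_interval_reflected)
    also have "\<dots> = ennreal (C * s powr (1 + \<alpha> + \<beta>))"
    proof -
      have "ma * s powr \<alpha> * (s powr (\<beta> + 1) / (\<beta> + 1)) + mb * s powr \<beta> * (s powr (\<alpha> + 1) / (\<alpha> + 1))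
          = C * s powr (1 + \<alpha> + \<beta>)"
        using s by (simp add: C_def powr_add field_simps)
      then show ?thesis using s ma al be
        by (simp add: ennreal_mult[symmetric] ennreal_plus[symmetric] del: ennreal_plus)
    qed
    finally show "(\<integral>\<^sup>+\<sigma>. ennreal ((s - \<sigma>) powr \<alpha> * \<sigma> powr \<beta>) * indicator {0<..<s} \<sigma> \<partial>lborel) \<le> ennreal (C * s powr (1 + \<alpha> + \<beta>))" .
  qed
qed

section \<open>The bilinear operator\<close>

lemma norm_integral_le_nn_integral:
  fixes f :: "'a \<Rightarrow> 'b::{banach, second_countable_topology}"
  shows "ennreal (norm (integral\<^sup>L M f)) \<le> (\<integral>\<^sup>+x. ennreal (norm (f x)) \<partial>M)"
proof (cases "integrable M f")
  case True then show ?thesis by (rule integral_norm_bound_ennreal)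
next
  case False then show ?thesis by (simp add: not_integrable_integral_eq)
qed

lemma norm_set_integral_le_nn_integral:
  fixes f :: "real \<Rightarrow> 'b::{banach, second_countable_topology}"
  shows "ennreal (norm (LINT s:A|lborel. f s)) \<le> (\<integral>\<^sup>+s. ennreal (norm (f s)) * indicator A s \<partial>lborel)"
proof -
  have "ennreal (norm (LINT s:A|lborel. f s)) \<le> (\<integral>\<^sup>+s. ennreal (norm (indicator A s *\<^sub>R f s)) \<partial>lborel)"
    unfolding set_lebesgue_integral_def by (rule norm_integral_le_nn_integral)
  also have "\<dots> = (\<integral>\<^sup>+s. ennreal (norm (f s)) * indicator A s \<partial>lborel)"
    by (intro nn_integral_cong) (auto simp: indicator_def)
  finally show ?thesis .
qed

text \<open>The Bochner integrals in \<open>Lop\<close> and \<open>Bop\<close> are \<open>0\<close> whenever the integrand is not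
  integrable; the majorants are nonnegative integrals and need no integrability.\<close>
definition Lop_majorant :: "real \<Rightarrow> (real \<Rightarrow> real^'d \<Rightarrow> real) \<Rightarrow> real \<Rightarrow> real^'d \<Rightarrow> ennreal" where
  "Lop_majorant \<tau> u s y = ennreal (1 / \<tau>) * (\<integral>\<^sup>+\<sigma>. (\<integral>\<^sup>+z. ennreal (norm (grad_heat_kernel ((s - \<sigma>) / \<tau>) (y - z))) * ennreal \<bar>u \<sigma> z\<bar> \<partial>lborel) * indicator {0<..<s} \<sigma> \<partial>lborel)"

lemma norm_Lop_le_majorant:
  assumes "0 < \<tau>"
  shows "ennreal (norm (Lop \<tau> u s y)) \<le> Lop_majorant \<tau> u s y"
proof -
  have "ennreal (norm (Lop \<tau> u s y)) = ennreal (1 / \<tau>) * ennreal (norm (LINT \<sigma>:{0<..<s}|lborel. (LINT z|lborel. u \<sigma> z *\<^sub>R grad_heat_kernel ((s - \<sigma>) / \<tau>) (y - z))))"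
    unfolding Lop_def norm_scaleR using assms by (subst ennreal_mult) auto
  also have "\<dots> \<le> ennreal (1 / \<tau>) * (\<integral>\<^sup>+\<sigma>. ennreal (norm (LINT z|lborel. u \<sigma> z *\<^sub>R grad_heat_kernel ((s - \<sigma>) / \<tau>) (y - z))) * indicator {0<..<s} \<sigma> \<partial>lborel)"
    by (intro mult_left_mono norm_set_integral_le_nn_integral) simp
  also have "\<dots> \<le> Lop_majorant \<tau> u s y"
    unfolding Lop_majorant_def
  proof (intro mult_left_mono nn_integral_mono mult_right_mono)
    fix \<sigma>
    have "ennreal (norm (LINT z|lborel. u \<sigma> z *\<^sub>R grad_heat_kernel ((s - \<sigma>) / \<tau>) (y - z)))
        \<le> (\<integral>\<^sup>+z. ennreal (norm (u \<sigma> z *\<^sub>R grad_heat_kernel ((s - \<sigma>) / \<tau>) (y - z))) \<partial>lborel)"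
      by (rule norm_integral_le_nn_integral)
    also have "\<dots> = (\<integral>\<^sup>+z. ennreal (norm (grad_heat_kernel ((s - \<sigma>) / \<tau>) (y - z))) * ennreal \<bar>u \<sigma> z\<bar> \<partial>lborel)"
      by (intro nn_integral_cong) (simp add: ennreal_mult mult.commute)
    finally show "ennreal (norm (LINT z|lborel. u \<sigma> z *\<^sub>R grad_heat_kernel ((s - \<sigma>) / \<tau>) (y - z)))
        \<le> (\<integral>\<^sup>+z. ennreal (norm (grad_heat_kernel ((s - \<sigma>) / \<tau>) (y - z))) * ennreal \<bar>u \<sigma> z\<bar> \<partial>lborel)" .
  qed auto
  finally show ?thesis .
qed

definition Bop_majorant :: "real \<Rightarrow> (real \<Rightarrow> real^'d \<Rightarrow> real) \<Rightarrow> real \<Rightarrow> real^'d \<Rightarrow> ennreal" where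
  "Bop_majorant \<tau> u t x = (\<integral>\<^sup>+s. (\<integral>\<^sup>+y. ennreal (norm (grad_heat_kernel (t - s) (x - y))) * (ennreal \<bar>u s y\<bar> * Lop_majorant \<tau> u s y) \<partial>lborel) * indicator {0<..<t} s \<partial>lborel)"

lemma abs_Bop_le_majorant:
  assumes "0 < \<tau>"
  shows "ennreal \<bar>Bop \<tau> u u t x\<bar> \<le> Bop_majorant \<tau> u t x"
proof -
  have "ennreal \<bar>Bop \<tau> u u t x\<bar> = ennreal (norm (LINT s:{0<..<t}|lborel. (LINT y|lborel. grad_heat_kernel (t - s) (x - y) \<bullet> (u s y *\<^sub>R Lop \<tau> u s y))))"
    by (simp add: Bop_def)
  also have "\<dots> \<le> (\<integral>\<^sup>+s. ennreal (norm (LINT y|lborel. grad_heat_kernel (t - s) (x - y) \<bullet> (u s y *\<^sub>R Lop \<tau> u s y))) * indicator {0<..<t} s \<partial>lborel)"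
    by (rule norm_set_integral_le_nn_integral)
  also have "\<dots> \<le> Bop_majorant \<tau> u t x"
    unfolding Bop_majorant_def
  proof (intro nn_integral_mono mult_right_mono)
    fix s
    have "ennreal (norm (LINT y|lborel. grad_heat_kernel (t - s) (x - y) \<bullet> (u s y *\<^sub>R Lop \<tau> u s y)))
        \<le> (\<integral>\<^sup>+y. ennreal (norm (grad_heat_kernel (t - s) (x - y) \<bullet> (u s y *\<^sub>R Lop \<tau> u s y))) \<partial>lborel)"
      by (rule norm_integral_le_nn_integral)
    also have "\<dots> \<le> (\<integral>\<^sup>+y. ennreal (norm (grad_heat_kernel (t - s) (x - y))) * (ennreal \<bar>u s y\<bar> * Lop_majorant \<tau> u s y) \<partial>lborel)"
    proof (intro nn_integral_mono)
      fix y
      have "norm (grad_heat_kernel (t - s) (x - y) \<bullet> (u s y *\<^sub>R Lop \<tau> u s y))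
          \<le> norm (grad_heat_kernel (t - s) (x - y)) * (\<bar>u s y\<bar> * norm (Lop \<tau> u s y))"
        using Cauchy_Schwarz_ineq2[of "grad_heat_kernel (t - s) (x - y)" "u s y *\<^sub>R Lop \<tau> u s y"]
        by simp
      then have "ennreal (norm (grad_heat_kernel (t - s) (x - y) \<bullet> (u s y *\<^sub>R Lop \<tau> u s y)))
          \<le> ennreal (norm (grad_heat_kernel (t - s) (x - y))) * (ennreal \<bar>u s y\<bar> * ennreal (norm (Lop \<tau> u s y)))"
        by (simp add: ennreal_mult[symmetric] ennreal_leI)
      also have "\<dots> \<le> ennreal (norm (grad_heat_kernel (t - s) (x - y))) * (ennreal \<bar>u s y\<bar> * Lop_majorant \<tau> u s y)"
        by (intro mult_left_mono norm_Lop_le_majorant assms) auto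
      finally show "ennreal (norm (grad_heat_kernel (t - s) (x - y) \<bullet> (u s y *\<^sub>R Lop \<tau> u s y)))
          \<le> ennreal (norm (grad_heat_kernel (t - s) (x - y))) * (ennreal \<bar>u s y\<bar> * Lop_majorant \<tau> u s y)" .
    qed
    finally show "ennreal (norm (LINT y|lborel. grad_heat_kernel (t - s) (x - y) \<bullet> (u s y *\<^sub>R Lop \<tau> u s y)))
        \<le> (\<integral>\<^sup>+y. ennreal (norm (grad_heat_kernel (t - s) (x - y))) * (ennreal \<bar>u s y\<bar> * Lop_majorant \<tau> u s y) \<partial>lborel)" .
  qed auto
  finally show ?thesis .
qed

lemma pred_in_greaterThanLessThan[measurable (raw)]:
  fixes f g :: "'a \<Rightarrow> real"
  assumes [measurable]: "f \<in> borel_measurable M" "g \<in> borel_measurable M"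
  shows "Measurable.pred M (\<lambda>x. g x \<in> {0<..<f x})"
proof -
  have "Measurable.pred M (\<lambda>x. 0 < g x \<and> g x < f x)" by measurable
  then show ?thesis by simp
qed

lemma measurable_Lop_majorant[measurable]:
  assumes [measurable]: "case_prod u \<in> borel_measurable (lborel \<Otimes>\<^sub>M lborel)"
  shows "(\<lambda>(s, y). Lop_majorant \<tau> u s y) \<in> borel_measurable (lborel \<Otimes>\<^sub>M lborel)"
  unfolding Lop_majorant_def by measurable

lemma Lpnorm_eq_enn_Lnorm:
  assumes "0 < r"
  shows "Lpnorm r f = enn_Lnorm r (\<lambda>x. ennreal \<bar>f x\<bar>)"
  using assms by (simp add: Lpnorm_def enn_powr_def Let_def)

lemma Lnorm_Lop_majorant_le:
  fixes u :: "real \<Rightarrow> real^'d \<Rightarrow> real"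
  assumes [measurable]: "case_prod u \<in> borel_measurable (lborel \<Otimes>\<^sub>M lborel)"
    and tau: "0 < \<tau>" and nu: "0 < \<nu>" and s: "0 < s"
    and pq: "1 \<le> a" "1 \<le> p" "1 \<le> q" "1 / a + 1 / p = 1 + 1 / q"
    and c: "0 < c" "\<And>r. 0 < r \<Longrightarrow>
      enn_Lnorm a (\<lambda>z::real^'d. ennreal (norm (grad_heat_kernel r z))) \<le> ennreal (c * r powr e)"
    and Cb: "0 \<le> Cb" "\<And>s. 0 < s \<Longrightarrow>
      (\<integral>\<^sup>+\<sigma>. ennreal ((s - \<sigma>) powr e * \<sigma> powr \<beta>) * indicator {0<..<s} \<sigma> \<partial>lborel) \<le> ennreal (Cb * s powr (1 + e + \<beta>))"
    and hyp: "AE \<sigma> in lborel. 0 < \<sigma> \<longrightarrow> Lpnorm p (u \<sigma>) \<le> ennreal (\<nu> * \<sigma> powr \<beta>)"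
  shows "enn_Lnorm q (Lop_majorant \<tau> u s) \<le> ennreal (c * Cb * \<nu> * \<tau> powr (- 1 - e) * s powr (1 + e + \<beta>))"
proof -
  define K where "K \<sigma> w = ennreal (norm (grad_heat_kernel ((s - \<sigma>) / \<tau>) (w::real^'d)))" for \<sigma> w
  define g where "g \<sigma> z = ennreal \<bar>u \<sigma> z\<bar>" for \<sigma> z
  define k where "k \<sigma> = c * ((s - \<sigma>) / \<tau>) powr e" for \<sigma>
  define G where "G \<sigma> = \<nu> * \<sigma> powr \<beta>" for \<sigma>
  define M where "M = c * \<nu> * \<tau> powr (- e)"
  have [measurable]: "case_prod K \<in> borel_measurable (lborel \<Otimes>\<^sub>M lborel)"
    "case_prod g \<in> borel_measurable (lborel \<Otimes>\<^sub>M lborel)"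
    "k \<in> borel_measurable borel" "G \<in> borel_measurable borel"
    unfolding K_def g_def k_def G_def by measurable
  have kG: "ennreal (k \<sigma> * G \<sigma>) * indicator {0<..<s} \<sigma>
      = ennreal M * (ennreal ((s - \<sigma>) powr e * \<sigma> powr \<beta>) * indicator {0<..<s} \<sigma>)" for \<sigma>
  proof -
    have "((s - \<sigma>) / \<tau>) powr e = (s - \<sigma>) powr e * \<tau> powr (- e)"
      unfolding powr_divide by (simp add: powr_minus divide_inverse)
    then show ?thesis
      using c nu by (simp add: k_def G_def M_def ennreal_mult[symmetric] mult_ac)
  qed
  have "enn_Lnorm q (\<lambda>y. \<integral>\<^sup>+\<sigma>. (\<integral>\<^sup>+z. K \<sigma> (y - z) * g \<sigma> z \<partial>lborel) * indicator {0<..<s} \<sigma> \<partial>lborel)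
      \<le> (\<integral>\<^sup>+\<sigma>. ennreal (k \<sigma> * G \<sigma>) * indicator {0<..<s} \<sigma> \<partial>lborel)"
  proof (rule nn_integral_time_convolution_Young[where a=a and m=p])
    show "\<And>\<sigma>. \<sigma> \<in> {0<..<s} \<Longrightarrow> enn_Lnorm a (K \<sigma>) \<le> ennreal (k \<sigma>)"
      unfolding K_def k_def using tau by (intro c(2)) auto
    show "AE \<sigma> in lborel. \<sigma> \<in> {0<..<s} \<longrightarrow> enn_Lnorm p (g \<sigma>) \<le> ennreal (G \<sigma>)"
      using hyp by eventually_elim (use pq(2) in \<open>auto simp: g_def G_def Lpnorm_eq_enn_Lnorm\<close>)
  qed (use pq c tau nu in \<open>auto simp: k_def G_def\<close>)
  also have "\<dots> = ennreal M * (\<integral>\<^sup>+\<sigma>. ennreal ((s - \<sigma>) powr e * \<sigma> powr \<beta>) * indicator {0<..<s} \<sigma> \<partial>lborel)"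
    unfolding kG by (rule nn_integral_cmult) measurable
  also have "\<dots> \<le> ennreal M * ennreal (Cb * s powr (1 + e + \<beta>))"
    by (intro mult_left_mono Cb(2) s) simp
  finally have "ennreal (1 / \<tau>) * enn_Lnorm q (\<lambda>y. \<integral>\<^sup>+\<sigma>. (\<integral>\<^sup>+z. K \<sigma> (y - z) * g \<sigma> z \<partial>lborel) * indicator {0<..<s} \<sigma> \<partial>lborel)
      \<le> ennreal (1 / \<tau>) * (ennreal M * ennreal (Cb * s powr (1 + e + \<beta>)))"
    by (rule mult_left_mono) simp
  moreover have "ennreal (1 / \<tau>) * (ennreal M * ennreal (Cb * s powr (1 + e + \<beta>)))
      = ennreal (c * Cb * \<nu> * \<tau> powr (- 1 - e) * s powr (1 + e + \<beta>))"
    using tau c nu Cb by (simp add: M_def ennreal_mult[symmetric] powr_diff powr_minus field_simps)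
  moreover have "enn_Lnorm q (Lop_majorant \<tau> u s)
      = ennreal (1 / \<tau>) * enn_Lnorm q (\<lambda>y. \<integral>\<^sup>+\<sigma>. (\<integral>\<^sup>+z. K \<sigma> (y - z) * g \<sigma> z \<partial>lborel) * indicator {0<..<s} \<sigma> \<partial>lborel)"
    unfolding Lop_majorant_def K_def g_def using pq by (intro enn_Lnorm_cmult) auto
  ultimately show ?thesis by simp
qed

lemma Lpnorm_Bop_le_aux:
  fixes u :: "real \<Rightarrow> real^'d \<Rightarrow> real"
  assumes [measurable]: "case_prod u \<in> borel_measurable (lborel \<Otimes>\<^sub>M lborel)"
    and tau: "0 < \<tau>" and nu: "0 < \<nu>" and t: "0 < t" and n: "2 \<le> real CARD('d)"
    and pq: "1 \<le> a" "1 \<le> p" "1 \<le> q" "1 / a + 1 / p = 1 + 1 / q" "1 / p + 1 / q = 2 / real CARD('d)"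
    and c: "0 < c" "\<And>r. 0 < r \<Longrightarrow>
      enn_Lnorm a (\<lambda>z::real^'d. ennreal (norm (grad_heat_kernel r z))) \<le> ennreal (c * r powr e)"
    and Cb: "0 < Cb" "\<And>s. 0 < s \<Longrightarrow>
      (\<integral>\<^sup>+\<sigma>. ennreal ((s - \<sigma>) powr e * \<sigma> powr \<beta>) * indicator {0<..<s} \<sigma> \<partial>lborel) \<le> ennreal (Cb * s powr (1 + e + \<beta>))"
    and c1: "0 < c1" "\<And>r. 0 < r \<Longrightarrow>
      (\<integral>\<^sup>+z. ennreal (norm (grad_heat_kernel r (z::real^'d))) \<partial>lborel) \<le> ennreal (c1 * r powr (- 1 / 2))"
    and C0: "0 < C0" "\<And>s. 0 < s \<Longrightarrow>
      (\<integral>\<^sup>+\<sigma>. ennreal ((s - \<sigma>) powr (- 1 / 2) * \<sigma> powr (- 1 / 2)) * indicator {0<..<s} \<sigma> \<partial>lborel) \<le> ennreal C0"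
    and ex: "\<beta> + (1 + e + \<beta>) = - 1 / 2"
    and hyp: "AE \<sigma> in lborel. 0 < \<sigma> \<longrightarrow> Lpnorm p (u \<sigma>) \<le> ennreal (\<nu> * \<sigma> powr \<beta>)"
  shows "Lpnorm (real CARD('d) / 2) (Bop \<tau> u u t) \<le> ennreal (c1 * C0 * c * Cb * \<nu>\<^sup>2 * \<tau> powr (- 1 - e))"
proof -
  define K where "K s z = ennreal (norm (grad_heat_kernel (t - s) (z::real^'d)))" for s z
  define g where "g s y = ennreal \<bar>u s y\<bar> * Lop_majorant \<tau> u s y" for s y
  define k where "k s = c1 * (t - s) powr (- 1 / 2)" for s
  define M where "M = c * Cb * \<nu>\<^sup>2 * \<tau> powr (- 1 - e)"
  define G where "G s = M * s powr (- 1 / 2)" for s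
  have M: "0 < M" using c(1) Cb(1) nu tau by (simp add: M_def)
  have [measurable]: "case_prod K \<in> borel_measurable (lborel \<Otimes>\<^sub>M lborel)"
    "case_prod g \<in> borel_measurable (lborel \<Otimes>\<^sub>M lborel)"
    "k \<in> borel_measurable borel" "G \<in> borel_measurable borel"
    unfolding K_def g_def k_def G_def by measurable
  have "AE s in lborel. s \<in> {0<..<t} \<longrightarrow> enn_Lnorm (real CARD('d) / 2) (g s) \<le> ennreal (G s)"
    using hyp
  proof eventually_elim
    case (elim s)
    show ?case
    proof
      assume "s \<in> {0<..<t}"
      then have s: "0 < s" by simp
      have "enn_Lnorm (real CARD('d) / 2) (g s) \<le> enn_Lnorm p (\<lambda>y. ennreal \<bar>u s y\<bar>) * enn_Lnorm q (Lop_majorant \<tau> u s)"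
        unfolding g_def using pq n by (intro enn_Lnorm_mult_le) auto
      also have "\<dots> \<le> ennreal (\<nu> * s powr \<beta>) * ennreal (c * Cb * \<nu> * \<tau> powr (- 1 - e) * s powr (1 + e + \<beta>))"
        using elim s pq(2) Lnorm_Lop_majorant_le[OF _ tau nu s pq(1-4) c Cb(1)[THEN less_imp_le] Cb(2) hyp]
        by (intro mult_mono) (auto simp: Lpnorm_eq_enn_Lnorm)
      also have "\<dots> = ennreal (G s)"
        using s nu c Cb by (simp add: G_def M_def ennreal_mult[symmetric] power2_eq_square
            powr_add[symmetric] ex mult_ac)
      finally show "enn_Lnorm (real CARD('d) / 2) (g s) \<le> ennreal (G s)" .
    qed
  qed
  then have "enn_Lnorm (real CARD('d) / 2) (\<lambda>x. \<integral>\<^sup>+s. (\<integral>\<^sup>+y. K s (x - y) * g s y \<partial>lborel) * indicator {0<..<t} s \<partial>lborel)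
      \<le> (\<integral>\<^sup>+s. ennreal (k s * G s) * indicator {0<..<t} s \<partial>lborel)"
    using c1 M n unfolding K_def k_def G_def
    by (intro nn_integral_time_convolution_Young[where a=1 and m="real CARD('d) / 2"]) auto
  also have "\<dots> = ennreal (c1 * M) *
      (\<integral>\<^sup>+s. ennreal ((t - s) powr (- 1 / 2) * s powr (- 1 / 2)) * indicator {0<..<t} s \<partial>lborel)"
    using c1 M by (subst nn_integral_cmult[symmetric])
      (auto simp: k_def G_def ennreal_mult mult_ac intro!: nn_integral_cong)
  also have "\<dots> \<le> ennreal (c1 * M) * ennreal C0"
    by (intro mult_left_mono C0(2) t) simp
  finally have "enn_Lnorm (real CARD('d) / 2) (Bop_majorant \<tau> u t) \<le> ennreal (c1 * C0 * M)"
    using c1 M C0 by (simp add: Bop_majorant_def K_def g_def ennreal_mult[symmetric] mult_ac)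
  moreover have "Lpnorm (real CARD('d) / 2) (Bop \<tau> u u t) \<le> enn_Lnorm (real CARD('d) / 2) (Bop_majorant \<tau> u t)"
    using n tau by (subst Lpnorm_eq_enn_Lnorm) (auto intro!: enn_powr_mono nn_integral_mono abs_Bop_le_majorant)
  ultimately show ?thesis
    by (simp add: M_def mult_ac)
qed

lemma Young_Hoelder_exponents:
  fixes n p :: real
  assumes n: "2 \<le> n" and p: "2 * n / 3 < p" "p \<le> n"
  obtains a q where "1 \<le> a" "1 \<le> q" "1 / a + 1 / p = 1 + 1 / q" "1 / p + 1 / q = 2 / n"
    "n / (2 * a) - (n + 1) / 2 = 1 / 2 - n / p"
proof -
  have p0: "0 < p" using n p by linarith
  define ia iq where "ia = 1 + 2 / n - 2 / p" and "iq = 2 / n - 1 / p"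
  have "0 < iq" "iq \<le> 1"
  proof -
    have "1 / p < 2 / n" using p n p0 by (simp add: field_simps)
    then show "0 < iq" by (simp add: iq_def)
    have "2 / n \<le> 1" "0 < 1 / p" using n p0 by simp_all
    then show "iq \<le> 1" unfolding iq_def by linarith
  qed
  moreover have "0 < ia" "ia \<le> 1"
  proof -
    have "2 / p < 3 / n" "1 / n \<le> 1 / 2" using p n p0 by (simp_all add: field_simps)
    then show "0 < ia" by (simp add: ia_def)
    have "1 / n \<le> 1 / p" using p p0 by (simp add: field_simps)
    then show "ia \<le> 1" by (simp add: ia_def)
  qed
  moreover have "n / 2 * ia - (n + 1) / 2 = 1 / 2 - n / p"
    using n by (simp add: ia_def field_simps)
  ultimately show ?thesis
    by (intro that[of "1 / ia" "1 / iq"]) (simp_all add: ia_def iq_def)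
qed

lemma Lpnorm_Bop_le:
  assumes "CARD('d) \<ge> 2" and p: "2 * real CARD('d) / 3 < p" "p \<le> real CARD('d)"
  obtains C where "0 \<le> C" "\<And>\<tau> \<nu> t (u :: real \<Rightarrow> real^'d \<Rightarrow> real).
    case_prod u \<in> borel_measurable (lborel \<Otimes>\<^sub>M lborel) \<Longrightarrow> 0 < \<tau> \<Longrightarrow> 0 < \<nu> \<Longrightarrow> 0 < t \<Longrightarrow>
    AE \<sigma> in lborel. 0 < \<sigma> \<longrightarrow> Lpnorm p (u \<sigma>) \<le> ennreal (\<nu> * \<sigma> powr (real CARD('d) / (2 * p) - 1)) \<Longrightarrow>
    Lpnorm (real CARD('d) / 2) (Bop \<tau> u u t) \<le> ennreal (C * \<tau> powr (- 3 / 2 + real CARD('d) / p) * \<nu>\<^sup>2)"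
proof -
  define n where "n = real CARD('d)"
  have n: "2 \<le> n" using assms(1) by (simp add: n_def)
  obtain a q where aq: "1 \<le> a" "1 \<le> q" "1 / a + 1 / p = 1 + 1 / q" "1 / p + 1 / q = 2 / n"
    "n / (2 * a) - (n + 1) / 2 = 1 / 2 - n / p"
    using Young_Hoelder_exponents[OF n p[folded n_def]] .
  have p1: "1 \<le> p" using n p n_def by linarith
  define e \<beta> where "e = 1 / 2 - n / p" and "\<beta> = n / (2 * p) - 1"
  have ex: "\<beta> + (1 + e + \<beta>) = - 1 / 2" by (simp add: e_def \<beta>_def field_simps)
  have "e > -1" using p n by (simp add: e_def n_def field_simps)
  moreover have "\<beta> > -1" using n p1 by (simp add: \<beta>_def)
  ultimately obtain Cb where Cb: "0 < Cb" "\<And>s. 0 < s \<Longrightarrow>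
    (\<integral>\<^sup>+\<sigma>. ennreal ((s - \<sigma>) powr e * \<sigma> powr \<beta>) * indicator {0<..<s} \<sigma> \<partial>lborel) \<le> ennreal (Cb * s powr (1 + e + \<beta>))"
    by (rule nn_integral_beta_kernel_le) blast+
  obtain C0 where C0: "0 < C0" "\<And>s. 0 < s \<Longrightarrow>
    (\<integral>\<^sup>+\<sigma>. ennreal ((s - \<sigma>) powr (- 1 / 2) * \<sigma> powr (- 1 / 2)) * indicator {0<..<s} \<sigma> \<partial>lborel) \<le> ennreal C0"
    using nn_integral_beta_kernel_le[of "- 1 / 2" "- 1 / 2"] by auto
  obtain c where c: "0 < c" "\<And>r. 0 < r \<Longrightarrow>
      enn_Lnorm a (\<lambda>z::real^'d. ennreal (norm (grad_heat_kernel r z))) \<le> ennreal (c * r powr e)"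
    using Lnorm_grad_heat_kernel_le[of a, where 'd='d] aq(1,5) unfolding e_def n_def by auto
  obtain c1 where c1: "0 < c1" "\<And>r. 0 < r \<Longrightarrow>
      (\<integral>\<^sup>+z. ennreal (norm (grad_heat_kernel r (z::real^'d))) \<partial>lborel) \<le> ennreal (c1 * r powr (- 1 / 2))"
    using Lnorm_grad_heat_kernel_le[of 1, where 'd='d] by (auto simp: field_simps)
  show ?thesis
  proof (rule that[of "c1 * C0 * c * Cb"])
    fix \<tau> \<nu> t :: real and u :: "real \<Rightarrow> real^'d \<Rightarrow> real"
    assume "case_prod u \<in> borel_measurable (lborel \<Otimes>\<^sub>M lborel)" "0 < \<tau>" "0 < \<nu>" "0 < t"
      and "AE \<sigma> in lborel. 0 < \<sigma> \<longrightarrow> Lpnorm p (u \<sigma>) \<le> ennreal (\<nu> * \<sigma> powr (real CARD('d) / (2 * p) - 1))"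
    from Lpnorm_Bop_le_aux[OF this(1-4) n[unfolded n_def] aq(1) p1 aq(2,3) aq(4)[unfolded n_def]
        c Cb c1 C0 ex this(5)[folded n_def, folded \<beta>_def]]
    show "Lpnorm (real CARD('d) / 2) (Bop \<tau> u u t) \<le> ennreal (c1 * C0 * c * Cb * \<tau> powr (- 3 / 2 + real CARD('d) / p) * \<nu>\<^sup>2)"
      by (simp add: e_def n_def mult_ac)
  qed (use c Cb c1 C0 in simp)
qed

text \<open>The infimum defining \<open>triple_norm\<close> is attained: countably many a.e.\ bounds hold
  simultaneously almost everywhere.\<close>
lemma AE_le_triple_norm:
  fixes u :: "real \<Rightarrow> real^'d \<Rightarrow> real"
  assumes fin: "triple_norm p u < \<infinity>"
  shows "AE t in lborel. 0 < t \<longrightarrow> ennreal (t powr (1 - real CARD('d) / (2 * p))) * Lpnorm p (u t) \<le> triple_norm p u"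
proof -
  define S where "S = {M. AE t in lborel. t > 0 \<longrightarrow>
      ennreal (t powr (1 - real CARD('d) / (2 * p))) * Lpnorm p (u t) \<le> M}"
  define N where "N = triple_norm p u"
  have NS: "N = Inf S" unfolding N_def S_def triple_norm_def ..
  have "\<forall>k::nat. \<exists>M\<in>S. M < N + ennreal (1 / Suc k)"
  proof
    fix k :: nat
    have "N < N + ennreal (1 / Suc k)" using fin unfolding N_def[symmetric]
      by (simp add: ennreal_less_top ennreal_add_left_cancel_less)
    then show "\<exists>M\<in>S. M < N + ennreal (1 / Suc k)" unfolding NS by (simp add: Inf_less_iff)
  qed
  then obtain M where M: "\<And>k. M k \<in> S" "\<And>k. M k < N + ennreal (1 / Suc k)" by metis
  have "AE t in lborel. \<forall>k. 0 < t \<longrightarrow> ennreal (t powr (1 - real CARD('d) / (2 * p))) * Lpnorm p (u t) \<le> M k"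
  proof -
    have "\<forall>k. AE t in lborel. 0 < t \<longrightarrow> ennreal (t powr (1 - real CARD('d) / (2 * p))) * Lpnorm p (u t) \<le> M k"
      using M(1) unfolding S_def by simp
    then have "AE t in lborel. \<forall>k. 0 < t \<longrightarrow> ennreal (t powr (1 - real CARD('d) / (2 * p))) * Lpnorm p (u t) \<le> M k"
      by (subst AE_all_countable) auto
    then show ?thesis by simp
  qed
  then show ?thesis
  proof eventually_elim
    case (elim t)
    show ?case
    proof
      assume t: "0 < t"
      show "ennreal (t powr (1 - real CARD('d) / (2 * p))) * Lpnorm p (u t) \<le> triple_norm p u"
        unfolding N_def[symmetric]
      proof (rule ennreal_le_epsilon)
        fix e :: real assume e: "0 < e"
        obtain k :: nat where k: "1 / Suc k < e"
          using e by (metis nat_approx_posE)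
        have "ennreal (t powr (1 - real CARD('d) / (2 * p))) * Lpnorm p (u t) \<le> M k" using elim t by auto
        also have "\<dots> \<le> N + ennreal (1 / Suc k)" using M(2)[of k] by simp
        also have "\<dots> \<le> N + ennreal e" using k by (intro add_left_mono ennreal_leI) simp
        finally show "ennreal (t powr (1 - real CARD('d) / (2 * p))) * Lpnorm p (u t) \<le> N + ennreal e" .
      qed
    qed
  qed
qed

lemma AE_Lpnorm_le_triple_norm:
  fixes u :: "real \<Rightarrow> real^'d \<Rightarrow> real"
  assumes \<nu>: "triple_norm p u \<le> ennreal \<nu>" "0 \<le> \<nu>"
  shows "AE \<sigma> in lborel. 0 < \<sigma> \<longrightarrow> Lpnorm p (u \<sigma>) \<le> ennreal (\<nu> * \<sigma> powr (real CARD('d) / (2 * p) - 1))"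
proof -
  have "triple_norm p u < \<infinity>"
    using \<nu>(1) by (simp add: le_less_trans)
  from AE_le_triple_norm[OF this] show ?thesis
  proof eventually_elim
    case (elim \<sigma>)
    show ?case
    proof
      assume \<sigma>: "0 < \<sigma>"
      define \<beta> where "\<beta> = real CARD('d) / (2 * p) - 1"
      have "Lpnorm p (u \<sigma>) = ennreal (\<sigma> powr \<beta>) * (ennreal (\<sigma> powr (- \<beta>)) * Lpnorm p (u \<sigma>))"
        using \<sigma> by (simp add: mult.assoc[symmetric] ennreal_mult[symmetric] powr_add[symmetric])
      also have "\<dots> \<le> ennreal (\<sigma> powr \<beta>) * ennreal \<nu>"
        using elim \<sigma> \<nu>(1) by (intro mult_left_mono) (auto simp: \<beta>_def intro: order_trans)
      finally show "Lpnorm p (u \<sigma>) \<le> ennreal (\<nu> * \<sigma> powr (real CARD('d) / (2 * p) - 1))"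
        using \<nu>(2) by (simp add: \<beta>_def ennreal_mult mult.commute)
    qed
  qed
qed

lemma le_ennreal_of_isCont_at_right:
  fixes f :: "real \<Rightarrow> real"
  assumes "isCont f x" and "\<And>y. x < y \<Longrightarrow> z \<le> ennreal (f y)"
  shows "z \<le> ennreal (f x)"
proof (rule tendsto_lowerbound)
  show "((\<lambda>y. ennreal (f y)) \<longlongrightarrow> ennreal (f x)) (at_right x)"
    using assms(1) by (intro tendsto_ennrealI) (simp add: isCont_def filterlim_at_split)
  show "\<forall>\<^sub>F y in at_right x. z \<le> ennreal (f y)"
    using eventually_at_right_less[of x] by eventually_elim (rule assms(2))
qed simp

theorem lemma3p7:
  fixes p :: real
  assumes "CARD('d) \<ge> 2"
    and "2 * real CARD('d) / 3 < p" and "p \<le> real CARD('d)"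
  shows "\<exists>C::real. \<forall>\<tau>>0. \<forall>u::real \<Rightarrow> real^'d \<Rightarrow> real. u \<in> Ep p \<longrightarrow>
           (\<forall>t>0. Lpnorm (real CARD('d) / 2) (Bop \<tau> u u t)
                   \<le> ennreal (C * \<tau> powr (- 3 / 2 + real CARD('d) / p)) * (triple_norm p u)\<^sup>2)"
proof (rule Lpnorm_Bop_le[OF assms], goal_cases)
  case (1 C)
  show ?case
  proof (intro exI[of _ C] allI impI)
    fix \<tau> t :: real and u :: "real \<Rightarrow> real^'d \<Rightarrow> real"
    assume \<tau>: "0 < \<tau>" and u: "u \<in> Ep p" and t: "0 < t"
    then have um: "case_prod u \<in> borel_measurable (lborel \<Otimes>\<^sub>M lborel)" and "triple_norm p u < \<infinity>"
      by (simp_all add: Ep_def case_prod_beta')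
    define N where "N = enn2real (triple_norm p u)"
    have N: "triple_norm p u = ennreal N" "0 \<le> N"
      using \<open>triple_norm p u < \<infinity>\<close> by (auto simp: N_def ennreal_enn2real_if less_top)
    have "Lpnorm (real CARD('d) / 2) (Bop \<tau> u u t) \<le> ennreal (C * \<tau> powr (- 3 / 2 + real CARD('d) / p) * N\<^sup>2)"
    proof (rule le_ennreal_of_isCont_at_right[where f = "\<lambda>\<nu>. C * \<tau> powr (- 3 / 2 + real CARD('d) / p) * \<nu>\<^sup>2"])
      fix \<nu> assume "N < \<nu>"
      with N have "triple_norm p u \<le> ennreal \<nu>" "0 \<le> \<nu>" "0 < \<nu>"
        by (auto intro: ennreal_leI)
      then show "Lpnorm (real CARD('d) / 2) (Bop \<tau> u u t) \<le> ennreal (C * \<tau> powr (- 3 / 2 + real CARD('d) / p) * \<nu>\<^sup>2)"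
        by (intro 1(2) um \<tau> t AE_Lpnorm_le_triple_norm)
    qed simp
    with 1(1) N show "Lpnorm (real CARD('d) / 2) (Bop \<tau> u u t)
        \<le> ennreal (C * \<tau> powr (- 3 / 2 + real CARD('d) / p)) * (triple_norm p u)\<^sup>2"
      by (simp add: ennreal_mult ennreal_power)
  qed
qed

end
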